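(* In the Coxeter arrangement of type $D_n$ ($n\ge2$): for $1\le i<j\le n$ the hyperplane $H_{i,j}=\{x_i=x_j\}$ has exactly $2^{j-i-1}$ shards, and the hyperplane $H_{i,-j}=\{x_i=-x_j\}$ has exactly $2^{j-i}3^{i-1}-2^{j-2}$ shards. Consequently the arrangement has $\sum_{1\le i<j\le n}\big(2^{j-i-1}+2^{j-i}3^{i-1}-2^{j-2}\big)=3^n-n2^{n-1}-n-1$ shards in total.
   Context: Shards. Let $V$ be a real Euclidean space with inner product $\langle\cdot,\cdot\rangle$, $\Phi\subset V$ a finite root system with a chosen set of positive roots $\Phi^+$, and $\mathcal A=\{H_\beta:\beta\in\Phi^+\}$ with $H_\beta=\{\lambda\in V:\langle\lambda,\beta\rangle=0\}$ (the Coxeter arrangement). The base region is $B=\{\lambda\in V:\langle\lambda,\beta\rangle>0\text{ for all }\beta\in\Phi^+\}$. For distinct $H,H'\in\mathcal A$ let $\mathcal A(H,H')$ be the set of hyperplanes of $\mathcal A$ containing $H\cap H'$ (a rank two subarrangement). Exactly one connected component $B'$ of $V\setminus\bigcup\mathcal A(H,H')$ contains $B$, and exactly two hyperplanes of $\mathcal A(H,H')$ contain facets of the closure of $B'$; these are the basic hyperplanes of $\mathcal A(H,H')$. Each non-basic $H''\in\mathcal A(H,H')$ is said to be cut by each of the two basic hyperplanes of $\mathcal A(H,H')$. For $H\in\mathcal A$ let $L_H$ be the set of hyperplanes of $\mathcal A$ that cut $H$ in some rank two subarrangement; the shards of $H$ are the closures of the connected components of $H\setminus\bigcup_{H_\gamma\in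 L_H}(H\cap H_\gamma)$. A shard of $\mathcal A$ is a shard of some $H\in\mathcal A$. Type $D_n$: $V=\mathbb R^n$ with the standard inner product, $\Phi^+=\{\varepsilon_j\pm\varepsilon_i:1\le i<j\le n\}$, base region $B=\{-x_2<\pm x_1<x_2<\cdots<x_n\}$; the hyperplanes are $H_{i,j}=\{x_i=x_j\}$ (root $\varepsilon_j-\varepsilon_i$) and $H_{i,-j}=\{x_i=-x_j\}$ (root $\varepsilon_j+\varepsilon_i$), $1\le i<j\le n$. *)

theory Defs
  imports "HOL-Analysis.Analysis"
begin

(* The Euclidean space R^n is represented as the functions nat => real supported
   in {1..n}, with the product topology (which restricted to this set is the
   Euclidean topology) and the standard inner product. *)
definition Vsp :: "nat \<Rightarrow> (nat \<Rightarrow> real) set" where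
  "Vsp n = {x. \<forall>k. k \<notin> {1..n} \<longrightarrow> x k = 0}"

definition ip :: "nat \<Rightarrow> (nat \<Rightarrow> real) \<Rightarrow> (nat \<Rightarrow> real) \<Rightarrow> real" where
  "ip n x y = (\<Sum>k=1..n. x k * y k)"

definition hyp :: "nat \<Rightarrow> (nat \<Rightarrow> real) \<Rightarrow> (nat \<Rightarrow> real) set" where
  "hyp n \<beta> = {x \<in> Vsp n. ip n x \<beta> = 0}"

definition arr :: "nat \<Rightarrow> (nat \<Rightarrow> real) set \<Rightarrow> (nat \<Rightarrow> real) set set" where
  "arr n P = hyp n ` P"

definition base :: "nat \<Rightarrow> (nat \<Rightarrow> real) set \<Rightarrow> (nat \<Rightarrow> real) set" where
  "base n P = {x \<in> Vsp n. \<forall>\<beta>\<in>P. ip n x \<beta> > 0}"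

definition subarr :: "nat \<Rightarrow> (nat \<Rightarrow> real) set \<Rightarrow> (nat \<Rightarrow> real) set \<Rightarrow> (nat \<Rightarrow> real) set
    \<Rightarrow> (nat \<Rightarrow> real) set set" where
  "subarr n P H H' = {H'' \<in> arr n P. H \<inter> H' \<subseteq> H''}"

definition base2 :: "nat \<Rightarrow> (nat \<Rightarrow> real) set \<Rightarrow> (nat \<Rightarrow> real) set \<Rightarrow> (nat \<Rightarrow> real) set
    \<Rightarrow> (nat \<Rightarrow> real) set" where
  "base2 n P H H' =
     {y. \<exists>b\<in>base n P. connected_component (Vsp n - \<Union>(subarr n P H H')) b y}"

(* H'' contains a facet of the closure of B': H'' \<inter> closure B' has nonempty
   interior relative to H'' (i.e. is (n-1)-dimensional) *)
definition contains_facet :: "(nat \<Rightarrow> real) set \<Rightarrow> (nat \<Rightarrow> real) set \<Rightarrow> bool" where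
  "contains_facet H'' C \<longleftrightarrow> (\<exists>U. open U \<and> U \<inter> H'' \<noteq> {} \<and> U \<inter> H'' \<subseteq> closure C)"

definition basic :: "nat \<Rightarrow> (nat \<Rightarrow> real) set \<Rightarrow> (nat \<Rightarrow> real) set \<Rightarrow> (nat \<Rightarrow> real) set
    \<Rightarrow> (nat \<Rightarrow> real) set set" where
  "basic n P H H' = {H'' \<in> subarr n P H H'. contains_facet H'' (base2 n P H H')}"

definition cuts :: "nat \<Rightarrow> (nat \<Rightarrow> real) set \<Rightarrow> (nat \<Rightarrow> real) set \<Rightarrow> (nat \<Rightarrow> real) set \<Rightarrow> bool" where
  "cuts n P G H \<longleftrightarrow> (\<exists>H1 H2. H1 \<in> arr n P \<and> H2 \<in> arr n P \<and> H1 \<noteq> H2 \<and>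
      H \<in> subarr n P H1 H2 \<and> H \<notin> basic n P H1 H2 \<and> G \<in> basic n P H1 H2)"

definition cutting :: "nat \<Rightarrow> (nat \<Rightarrow> real) set \<Rightarrow> (nat \<Rightarrow> real) set \<Rightarrow> (nat \<Rightarrow> real) set set" where
  "cutting n P H = {G \<in> arr n P. cuts n P G H}"

definition shards_of :: "nat \<Rightarrow> (nat \<Rightarrow> real) set \<Rightarrow> (nat \<Rightarrow> real) set \<Rightarrow> (nat \<Rightarrow> real) set set" where
  "shards_of n P H = closure ` components (H - \<Union>{H \<inter> G | G. G \<in> cutting n P H})"

definition shards :: "nat \<Rightarrow> (nat \<Rightarrow> real) set \<Rightarrow> (nat \<Rightarrow> real) set set" where
  "shards n P = (\<Union>H\<in>arr n P. shards_of n P H)"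

definition eps :: "nat \<Rightarrow> nat \<Rightarrow> real" where
  "eps i = (\<lambda>k. if k = i then 1 else 0)"

definition posD :: "nat \<Rightarrow> (nat \<Rightarrow> real) set" where
  "posD n = {(\<lambda>k. eps j k - eps i k) | i j. 1 \<le> i \<and> i < j \<and> j \<le> n}
          \<union> {(\<lambda>k. eps j k + eps i k) | i j. 1 \<le> i \<and> i < j \<and> j \<le> n}"

definition Hm :: "nat \<Rightarrow> nat \<Rightarrow> nat \<Rightarrow> (nat \<Rightarrow> real) set" where
  "Hm n i j = {x \<in> Vsp n. x i = x j}"

definition Hp :: "nat \<Rightarrow> nat \<Rightarrow> nat \<Rightarrow> (nat \<Rightarrow> real) set" where
  "Hp n i j = {x \<in> Vsp n. x i = - x j}"

end

theory Submission
  imports Defs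
begin

text \<open>
  In a rank two subarrangement of a simply laced arrangement the roots are either just two
  roots, both basic, or three roots \<open>x\<close>, \<open>y\<close>, \<open>x + y\<close>, of which only \<open>H\<^sub>x\<^sub>+\<^sub>y\<close> is not basic.
  Hence \<open>H\<^sub>\<alpha>\<close> cuts \<open>H\<^sub>\<gamma>\<close> exactly when \<open>\<gamma> - \<alpha>\<close> is a root, and the shards of \<open>H\<^sub>\<gamma>\<close> are the
  closures of the sign classes of \<open>H\<^sub>\<gamma>\<close> with respect to these cut roots. Sign classes are
  convex and relatively open, so they are the connected components, and shards of distinct
  hyperplanes are disjoint.

  In type \<open>D\<^sub>n\<close> the cut roots of \<open>\<epsilon>\<^sub>j - \<epsilon>\<^sub>i\<close> are the \<open>\<epsilon>\<^sub>k - \<epsilon>\<^sub>i\<close> and \<open>\<epsilon>\<^sub>j - \<epsilon>\<^sub>k\<close> with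
  \<open>i < k < j\<close>, so a shard of \<open>H\<^sub>i\<^sub>,\<^sub>j\<close> is given by the sides of \<open>x\<^sub>i = x\<^sub>j\<close> on which the
  \<open>x\<^sub>k\<close> lie: \<open>2\<^bsup>j-i-1\<^esup>\<close> shards. On \<open>H\<^sub>i\<^sub>,\<^sub>-\<^sub>j\<close> a shard is given by the position of \<open>x\<^sub>k\<close>
  relative to \<open>x\<^sub>j\<close> for \<open>k < j\<close>, \<open>k \<noteq> i\<close>, and relative to \<open>-x\<^sub>j\<close> for \<open>k < i\<close>; the realisable
  patterns are those compatible with \<open>x\<^sub>j \<ge> 0\<close> or with \<open>x\<^sub>j \<le> 0\<close>, and inclusion-exclusion
  gives \<open>2 \<cdot> 3\<^bsup>i-1\<^esup> 2\<^bsup>j-i-1\<^esup> - 2\<^bsup>j-2\<^esup>\<close>.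
\<close>

section \<open>Inner products, hyperplanes and cones\<close>

lemma ip_commute: "ip n x y = ip n y x"
  by (simp add: ip_def mult.commute)

lemma ip_add_left: "ip n (\<lambda>k. x k + y k) z = ip n x z + ip n y z"
  by (simp add: ip_def sum.distrib algebra_simps)

lemma ip_diff_left: "ip n (\<lambda>k. x k - y k) z = ip n x z - ip n y z"
  by (simp add: ip_def sum_subtractf algebra_simps)

lemma ip_scale_left: "ip n (\<lambda>k. a * x k) z = a * ip n x z"
  by (simp add: ip_def sum_distrib_left algebra_simps)

lemma ip_divide_left: "ip n (\<lambda>k. x k / a) z = ip n x z / a"
  by (simp add: ip_def sum_divide_distrib)

lemma ip_minus_left: "ip n (\<lambda>k. - x k) z = - ip n x z"
  by (simp add: ip_def sum_negf)

lemma ip_scale_right: "ip n z (\<lambda>k. a * x k) = a * ip n z x"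
  by (metis ip_scale_left ip_commute)

lemma ip_divide_right: "ip n z (\<lambda>k. x k / a) = ip n z x / a"
  by (metis ip_divide_left ip_commute)

lemma ip_add_right: "ip n z (\<lambda>k. x k + y k) = ip n z x + ip n z y"
  by (metis ip_add_left ip_commute)

lemma ip_diff_right: "ip n z (\<lambda>k. x k - y k) = ip n z x - ip n z y"
  by (metis ip_diff_left ip_commute)

lemma ip_minus_right: "ip n z (\<lambda>k. - x k) = - ip n z x"
  by (metis ip_minus_left ip_commute)

lemmas ip_linear = ip_add_left ip_diff_left ip_scale_left ip_divide_left ip_minus_left
  ip_add_right ip_diff_right ip_scale_right ip_divide_right ip_minus_right

lemma ip_zero_left: "ip n (\<lambda>k. 0) z = 0"
  by (simp add: ip_def)

lemma ip_eps: "1 \<le> j \<Longrightarrow> j \<le> n \<Longrightarrow> ip n x (eps j) = x j"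
  by (simp add: ip_def eps_def if_distrib cong: if_cong)

lemma ip_self_eq_0_iff:
  assumes "x \<in> Vsp n" shows "ip n x x = 0 \<longleftrightarrow> x = (\<lambda>k. 0)"
proof
  assume "ip n x x = 0"
  then have "\<forall>k\<in>{1..n}. x k * x k = 0"
    using sum_nonneg_eq_0_iff[of "{1..n}" "\<lambda>k. x k * x k"] by (simp add: ip_def)
  then show "x = (\<lambda>k. 0)" using assms by (force simp: Vsp_def)
qed (simp add: ip_def)

lemma hyp_Int_diff: "hyp n a \<inter> hyp n b = hyp n (\<lambda>k. a k - b k) \<inter> hyp n b"
  by (auto simp: hyp_def ip_linear)

lemma hyp_Int_subset_hyp_add: "hyp n a \<inter> hyp n b \<subseteq> hyp n (\<lambda>k. a k + b k)"
  by (auto simp: hyp_def ip_linear)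

lemma continuous_on_ip: "continuous_on UNIV (\<lambda>x::nat\<Rightarrow>real. ip n x \<beta>)"
  unfolding ip_def by (intro continuous_intros continuous_on_product_coordinates)

lemma continuous_on_line: "continuous_on UNIV (\<lambda>s::real. (\<lambda>k. p k + s * d k) :: nat \<Rightarrow> real)"
  by (intro continuous_intros continuous_on_coordinatewise_then_product)

lemma open_halfspace_ip: "open {x. c < ip n x \<beta>}"
  using open_Collect_less[OF continuous_on_const continuous_on_ip] by simp

lemma open_Collect_ip_pos: "finite V \<Longrightarrow> open {x. \<forall>v\<in>V. 0 < ip n x v}"
proof -
  assume "finite V"
  moreover have "{x. \<forall>v\<in>V. 0 < ip n x v} = (\<Inter>v\<in>V. {x. 0 < ip n x v})" by auto
  ultimately show ?thesis using open_halfspace_ip by auto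
qed

lemma closed_Vsp: "closed (Vsp n)"
proof -
  have "closed {x::nat\<Rightarrow>real. x k = 0}" for k
    by (rule closed_Collect_eq) (simp_all add: continuous_on_product_coordinates)
  moreover have "Vsp n = (\<Inter>k\<in>-{1..n}. {x. x k = 0})" by (auto simp: Vsp_def)
  ultimately show ?thesis by auto
qed

lemma closed_hyp: "closed (hyp n \<beta>)"
proof -
  have "hyp n \<beta> = Vsp n \<inter> {x. ip n x \<beta> = 0}" by (auto simp: hyp_def)
  then show ?thesis
    using closed_Vsp closed_Collect_eq[OF continuous_on_ip continuous_on_const] by auto
qed

lemma open_contains_line_nbhd:
  fixes p d :: "nat \<Rightarrow> real"
  assumes "open U" "p \<in> U"
  obtains e where "e > 0" "\<And>s. \<bar>s\<bar> < e \<Longrightarrow> (\<lambda>k. p k + s * d k) \<in> U"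
proof -
  let ?g = "\<lambda>s::real. (\<lambda>k. p k + s * d k) :: nat \<Rightarrow> real"
  have "open (?g -` U)" "0 \<in> ?g -` U"
    using continuous_on_open_vimage[OF open_UNIV] continuous_on_line assms by auto
  then obtain e where "e > 0" "ball 0 e \<subseteq> ?g -` U"
    using open_contains_ball by blast
  then show ?thesis using that[of e] by (auto simp: dist_real_def subset_iff)
qed

lemma connected_ip_pos:
  assumes "connected T" "b \<in> T" "0 < ip n b \<delta>" "\<And>t. t \<in> T \<Longrightarrow> ip n t \<delta> \<noteq> 0" "t \<in> T"
  shows "0 < ip n t \<delta>"
proof (rule ccontr)
  assume "\<not> 0 < ip n t \<delta>"
  moreover have "connected ((\<lambda>x. ip n x \<delta>) ` T)"
    using connected_continuous_image[OF continuous_on_subset[OF continuous_on_ip] assms(1)] by simp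
  ultimately have "0 \<in> (\<lambda>x. ip n x \<delta>) ` T"
    using assms(2,3,5) unfolding connected_iff_interval by (meson imageI not_less less_imp_le)
  then show False using assms(4) by auto
qed

definition pos_cone :: "nat \<Rightarrow> (nat \<Rightarrow> real) set \<Rightarrow> (nat \<Rightarrow> real) set" where
  "pos_cone n V = {y \<in> Vsp n. \<forall>v\<in>V. 0 < ip n y v}"

lemma closure_pos_cone_subset: "closure (pos_cone n A) \<subseteq> {y \<in> Vsp n. \<forall>\<epsilon>\<in>A. 0 \<le> ip n y \<epsilon>}"
proof (rule closure_minimal)
  have "{y \<in> Vsp n. \<forall>\<epsilon>\<in>A. 0 \<le> ip n y \<epsilon>} = Vsp n \<inter> (\<Inter>\<epsilon>\<in>A. {y. 0 \<le> ip n y \<epsilon>})" by auto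
  then show "closed {y \<in> Vsp n. \<forall>\<epsilon>\<in>A. 0 \<le> ip n y \<epsilon>}"
    using closed_Vsp closed_Collect_le[OF continuous_on_const continuous_on_ip]
    by (auto intro!: closed_Int closed_INT)
qed (auto simp: pos_cone_def)

definition signed :: "bool \<Rightarrow> (nat \<Rightarrow> real) \<Rightarrow> nat \<Rightarrow> real" where
  "signed b v = (if b then v else (\<lambda>k. - v k))"

lemma ip_signed_pos_iff: "0 < ip n y (signed b v) \<longleftrightarrow> (if b then 0 < ip n y v else ip n y v < 0)"
  by (simp add: signed_def ip_linear)

lemma eventually_at_right_pos_affine:
  fixes a c :: real
  assumes "0 < a \<or> (a = 0 \<and> 0 < c)"
  shows "\<forall>\<^sub>F s in at_right 0. 0 < a + s * c"
  using assms
proof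
  assume "0 < a"
  moreover have "((\<lambda>s. a + s * c) \<longlongrightarrow> a) (at_right 0)"
    by (auto intro!: tendsto_eq_intros)
  ultimately show ?thesis by (rule order_tendstoD(1)[rotated])
next
  assume "a = 0 \<and> 0 < c"
  then show ?thesis by simp (rule eventually_mono[OF eventually_at_right_less], simp)
qed

section \<open>Cells and connected components\<close>

definition segment_closed :: "(nat \<Rightarrow> real) set \<Rightarrow> bool" where
  "segment_closed C \<longleftrightarrow>
     (\<forall>x\<in>C. \<forall>y\<in>C. \<forall>t::real. 0 \<le> t \<and> t \<le> 1 \<longrightarrow> (\<lambda>k. x k + t * (y k - x k)) \<in> C)"

lemma segment_closed_imp_connected:
  assumes "segment_closed C" shows "connected C"
proof (cases "C = {}")
  case False
  then obtain c where c: "c \<in> C" by auto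
  let ?seg = "\<lambda>y. (\<lambda>t::real. (\<lambda>k. c k + t * (y k - c k)) :: nat \<Rightarrow> real) ` {0..1}"
  have "C = \<Union>(?seg ` C)"
  proof
    have "y \<in> ?seg y" for y by (rule image_eqI[where x=1]) auto
    then show "C \<subseteq> \<Union>(?seg ` C)" by blast
    show "\<Union>(?seg ` C) \<subseteq> C"
      using assms c unfolding segment_closed_def by auto
  qed
  moreover have "connected (\<Union>(?seg ` C))"
  proof (rule connected_Union)
    have "continuous_on {0..1} (\<lambda>t::real. (\<lambda>k. c k + t * (y k - c k)) :: nat \<Rightarrow> real)" for y
      by (intro continuous_intros continuous_on_coordinatewise_then_product)
    then show "connected s" if "s \<in> ?seg ` C" for s
      using that connected_continuous_image connected_Icc by blast
    have "c \<in> ?seg y" for y by (rule image_eqI[where x=0]) auto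
    then show "\<Inter>(?seg ` C) \<noteq> {}" by blast
  qed
  ultimately show ?thesis by simp
qed simp

lemma segment_closed_pos_cone: "segment_closed (pos_cone n V)"
proof -
  have "0 < a + t * (b - a)" if "0 < a" "0 < b" "0 \<le> t" "t \<le> 1" for a b t :: real
  proof -
    have "0 \<le> (1 - t) * a" "0 \<le> t * b" using that by simp_all
    moreover have "(1 - t) * a > 0 \<or> t * b > 0" using that by (cases "t = 1") auto
    moreover have "a + t * (b - a) = (1 - t) * a + t * b" by (simp add: algebra_simps)
    ultimately show ?thesis by linarith
  qed
  then show ?thesis
    by (auto simp: segment_closed_def pos_cone_def Vsp_def ip_linear)
qed

lemma segment_closed_hyp: "segment_closed (hyp n \<gamma>)"
  by (auto simp: segment_closed_def hyp_def Vsp_def ip_linear)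

lemma segment_closed_Int: "segment_closed A \<Longrightarrow> segment_closed B \<Longrightarrow> segment_closed (A \<inter> B)"
  by (simp add: segment_closed_def)

lemma hyp_Int_pos_cone: "hyp n \<gamma> \<inter> pos_cone n V = hyp n \<gamma> \<inter> {x. \<forall>v\<in>V. 0 < ip n x v}"
  by (auto simp: hyp_def pos_cone_def)

lemma connected_component_eq_label_fibre:
  fixes S :: "'a::topological_space set"
  assumes conn: "\<And>x. x \<in> S \<Longrightarrow> connected {y\<in>S. f y = f x}"
      and op: "\<And>x. x \<in> S \<Longrightarrow> \<exists>Q. open Q \<and> {y\<in>S. f y = f x} = S \<inter> Q"
      and x: "x \<in> S"
  shows "connected_component_set S x = {y\<in>S. f y = f x}"
proof
  show "{y\<in>S. f y = f x} \<subseteq> connected_component_set S x"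
    using connected_component_maximal[of x "{y\<in>S. f y = f x}" S] conn x by auto
next
  let ?C = "connected_component_set S x"
  have "f constant_on ?C"
  proof (rule locally_constant_imp_constant[OF connected_connected_component])
    fix a assume a: "a \<in> ?C"
    then have "a \<in> S" using connected_component_subset by blast
    then obtain Q where "open Q" "{y\<in>S. f y = f a} = S \<inter> Q" using op by blast
    moreover have "?C \<subseteq> S" by (rule connected_component_subset)
    ultimately have "openin (top_of_set ?C) (?C \<inter> Q)" "\<forall>y\<in>?C \<inter> Q. f y = f a"
      by (auto simp: openin_open)
    moreover have "a \<in> ?C \<inter> Q" using a \<open>a \<in> S\<close> \<open>{y\<in>S. f y = f a} = S \<inter> Q\<close> by blast
    ultimately show "\<exists>T. openin (top_of_set ?C) T \<and> a \<in> T \<and> (\<forall>y\<in>T. f y = f a)" by blast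
  qed
  moreover have "x \<in> ?C" using x by simp
  ultimately show "?C \<subseteq> {y\<in>S. f y = f x}"
    using connected_component_subset by (fastforce simp: constant_on_def)
qed

lemma bij_betw_label_closure_components:
  fixes S :: "'a::topological_space set"
  assumes conn: "\<And>x. x \<in> S \<Longrightarrow> connected {y\<in>S. f y = f x}"
      and op: "\<And>x. x \<in> S \<Longrightarrow> \<exists>Q. open Q \<and> {y\<in>S. f y = f x} = S \<inter> Q"
  shows "components S = (\<lambda>x. {y\<in>S. f y = f x}) ` S"
    and "bij_betw (\<lambda>\<sigma>. closure {y\<in>S. f y = \<sigma>}) (f ` S) (closure ` components S)"
proof -
  show comps: "components S = (\<lambda>x. {y\<in>S. f y = f x}) ` S"
    unfolding components_def using connected_component_eq_label_fibre[OF conn op] by auto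
  have "inj_on (\<lambda>\<sigma>. closure {y\<in>S. f y = \<sigma>}) (f ` S)"
  proof (rule inj_onI)
    fix s1 s2 assume "s1 \<in> f ` S" "s2 \<in> f ` S"
      and eq: "closure {y\<in>S. f y = s1} = closure {y\<in>S. f y = s2}"
    then obtain x1 where x1: "x1 \<in> S" "f x1 = s1" by auto
    then obtain Q where Q: "open Q" "{y\<in>S. f y = s1} = S \<inter> Q" using op by blast
    have "x1 \<in> Q \<inter> closure {y\<in>S. f y = s2}"
      using Q x1 eq closure_subset[of "{y\<in>S. f y = s1}"] by blast
    then obtain w where "w \<in> Q" "w \<in> S" "f w = s2"
      using open_Int_closure_eq_empty[OF Q(1)] by blast
    moreover have "w \<in> {y\<in>S. f y = s1}" using Q(2) \<open>w \<in> Q\<close> \<open>w \<in> S\<close> by blast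
    ultimately show "s1 = s2" by simp
  qed
  then show "bij_betw (\<lambda>\<sigma>. closure {y\<in>S. f y = \<sigma>}) (f ` S) (closure ` components S)"
    by (simp add: bij_betw_def comps image_image)
qed

lemma closure_components_by_cells:
  assumes S: "S \<subseteq> hyp n \<gamma>"
    and fin: "\<And>x. x \<in> S \<Longrightarrow> finite (V x)"
    and fib: "\<And>x. x \<in> S \<Longrightarrow> {y\<in>S. f y = f x} = hyp n \<gamma> \<inter> pos_cone n (V x)"
  shows "bij_betw (\<lambda>\<sigma>. closure {y\<in>S. f y = \<sigma>}) (f ` S) (closure ` components S)"
    and "c \<in> components S \<Longrightarrow> \<exists>Q. open Q \<and> c = hyp n \<gamma> \<inter> Q \<and> c \<noteq> {}"
proof -
  have conn: "connected {y\<in>S. f y = f x}" if "x \<in> S" for x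
    unfolding fib[OF that]
    by (intro segment_closed_imp_connected segment_closed_Int segment_closed_hyp segment_closed_pos_cone)
  have rel_open: "open {y. \<forall>v\<in>V x. 0 < ip n y v} \<and>
      {y\<in>S. f y = f x} = hyp n \<gamma> \<inter> {y. \<forall>v\<in>V x. 0 < ip n y v}" if "x \<in> S" for x
    using fib[OF that] open_Collect_ip_pos[OF fin[OF that]] by (simp add: hyp_Int_pos_cone)
  have op: "\<exists>Q. open Q \<and> {y\<in>S. f y = f x} = S \<inter> Q" if "x \<in> S" for x
    using rel_open[OF that] S by blast
  note labels = bij_betw_label_closure_components[OF conn op]
  show "bij_betw (\<lambda>\<sigma>. closure {y\<in>S. f y = \<sigma>}) (f ` S) (closure ` components S)"
    by (rule labels(2))
  assume "c \<in> components S"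
  then obtain x where "x \<in> S" "c = {y\<in>S. f y = f x}" using labels(1) by blast
  then show "\<exists>Q. open Q \<and> c = hyp n \<gamma> \<inter> Q \<and> c \<noteq> {}" using rel_open by blast
qed

definition sign_vector :: "nat \<Rightarrow> ('i \<Rightarrow> nat \<Rightarrow> real) \<Rightarrow> 'i set \<Rightarrow> (nat \<Rightarrow> real) \<Rightarrow> 'i \<Rightarrow> bool" where
  "sign_vector n w I x = restrict (\<lambda>\<iota>. 0 < ip n x (w \<iota>)) I"

lemma sign_vector_cells:
  fixes n :: nat and \<gamma> :: "nat \<Rightarrow> real" and w :: "'i \<Rightarrow> nat \<Rightarrow> real"
  assumes "finite I"
  defines "S \<equiv> {x \<in> hyp n \<gamma>. \<forall>\<iota>\<in>I. ip n x (w \<iota>) \<noteq> 0}"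
  shows "bij_betw (\<lambda>\<sigma>. closure {y\<in>S. sign_vector n w I y = \<sigma>}) (sign_vector n w I ` S)
      (closure ` components S)"
    and "c \<in> components S \<Longrightarrow> \<exists>Q. open Q \<and> c = hyp n \<gamma> \<inter> Q \<and> c \<noteq> {}"
proof -
  let ?V = "\<lambda>x. (\<lambda>\<iota>. signed (0 < ip n x (w \<iota>)) (w \<iota>)) ` I"
  have "{y\<in>S. sign_vector n w I y = sign_vector n w I x} = hyp n \<gamma> \<inter> pos_cone n (?V x)"
    if "x \<in> S" for x
  proof (rule set_eqI)
    fix y
    have same_sign: "(ip n y (w \<iota>) \<noteq> 0 \<and> (0 < ip n y (w \<iota>)) = (0 < ip n x (w \<iota>)))
        \<longleftrightarrow> 0 < ip n y (signed (0 < ip n x (w \<iota>)) (w \<iota>))" if "\<iota> \<in> I" for \<iota>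
      using \<open>x \<in> S\<close> that by (auto simp: S_def ip_signed_pos_iff)
    have "sign_vector n w I y = sign_vector n w I x
        \<longleftrightarrow> (\<forall>\<iota>\<in>I. (0 < ip n y (w \<iota>)) = (0 < ip n x (w \<iota>)))"
      by (auto simp: sign_vector_def fun_eq_iff restrict_def)
    then have "y \<in> {y\<in>S. sign_vector n w I y = sign_vector n w I x}
        \<longleftrightarrow> y \<in> hyp n \<gamma> \<and> (\<forall>\<iota>\<in>I. ip n y (w \<iota>) \<noteq> 0 \<and> (0 < ip n y (w \<iota>)) = (0 < ip n x (w \<iota>)))"
      by (auto simp: S_def)
    also have "\<dots> \<longleftrightarrow> y \<in> hyp n \<gamma> \<and> (\<forall>\<iota>\<in>I. 0 < ip n y (signed (0 < ip n x (w \<iota>)) (w \<iota>)))"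
      using same_sign by auto
    also have "\<dots> \<longleftrightarrow> y \<in> hyp n \<gamma> \<inter> pos_cone n (?V x)"
      by (auto simp: pos_cone_def hyp_def)
    finally show "y \<in> {y\<in>S. sign_vector n w I y = sign_vector n w I x}
        \<longleftrightarrow> y \<in> hyp n \<gamma> \<inter> pos_cone n (?V x)" .
  qed
  note cells = closure_components_by_cells[of S n \<gamma> ?V, OF _ _ this]
  show "bij_betw (\<lambda>\<sigma>. closure {y\<in>S. sign_vector n w I y = \<sigma>}) (sign_vector n w I ` S)
      (closure ` components S)"
    "c \<in> components S \<Longrightarrow> \<exists>Q. open Q \<and> c = hyp n \<gamma> \<inter> Q \<and> c \<noteq> {}"
    using cells assms(1) by (auto simp: S_def)
qed

lemma finite_sign_vectors: "finite I \<Longrightarrow> finite (sign_vector n w I ` S)"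
  by (rule finite_subset[OF _ finite_PiE[of I "\<lambda>_. UNIV"]]) (auto simp: sign_vector_def)

section \<open>Simply laced positive systems\<close>

lemma rank2_coefficients:
  fixes a b c u v p1 p2 :: real
  assumes "c \<in> {-1,0,1}" "u \<in> {-1,0,1}" "v \<in> {-1,0,1}"
    and "a = (2 * u - c * v) / (4 - c\<^sup>2)" "b = (2 * v - c * u) / (4 - c\<^sup>2)"
    and "a * u + b * v = 2" "0 < a * p1 + b * p2" "0 < p1" "0 < p2"
  shows "(a = 1 \<and> b = 1) \<or> (a = 1 \<and> b = -1) \<or> (a = -1 \<and> b = 1)"
  using assms by (elim insertE emptyE) (auto simp: power2_eq_square)

lemma gram2_solution:
  fixes a b c u v :: real
  assumes "c \<in> {-1,0,1}"
    and a: "a = (2 * u - c * v) / (4 - c\<^sup>2)" and b: "b = (2 * v - c * u) / (4 - c\<^sup>2)"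
  shows "2 * a + c * b = u" "c * a + 2 * b = v"
proof -
  have "4 - c\<^sup>2 \<noteq> 0" using assms(1) by auto
  then show "2 * a + c * b = u" "c * a + 2 * b = v"
    unfolding a b by (simp_all add: divide_simps) (simp_all add: algebra_simps power2_eq_square)
qed

locale simply_laced_system =
  fixes n :: nat and P :: "(nat \<Rightarrow> real) set" and b0 :: "nat \<Rightarrow> real"
  assumes finite_roots: "finite P"
    and roots_in_Vsp: "\<And>\<delta>. \<delta> \<in> P \<Longrightarrow> \<delta> \<in> Vsp n"
    and ip_root_self: "\<And>\<delta>. \<delta> \<in> P \<Longrightarrow> ip n \<delta> \<delta> = 2"
    and ip_roots: "\<And>\<delta> \<epsilon>. \<delta> \<in> P \<Longrightarrow> \<epsilon> \<in> P \<Longrightarrow> \<delta> \<noteq> \<epsilon> \<Longrightarrow> ip n \<delta> \<epsilon> \<in> {-1,0,1}"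
    and b0_in_Vsp: "b0 \<in> Vsp n"
    and ip_b0_pos: "\<And>\<delta>. \<delta> \<in> P \<Longrightarrow> 0 < ip n b0 \<delta>"
begin

lemma b0_in_base: "b0 \<in> base n P"
  using b0_in_Vsp ip_b0_pos by (simp add: base_def)

text \<open>The witness is the projection \<open>\<epsilon> - (\<langle>\<epsilon>,\<delta>\<rangle>/2) \<delta>\<close> of \<open>\<epsilon>\<close> to \<open>H\<^sub>\<delta>\<close>.\<close>

lemma obtain_in_hyp_ip_pos:
  assumes "\<delta> \<in> P" "\<epsilon> \<in> P" "\<delta> \<noteq> \<epsilon>"
  obtains d where "d \<in> hyp n \<delta>" "0 < ip n d \<epsilon>"
proof
  define c where "c = ip n \<epsilon> \<delta>"
  have c: "c \<in> {-1,0,1}" "ip n \<delta> \<epsilon> = c"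
    using ip_roots[OF assms(2,1)] assms(3) ip_commute unfolding c_def by auto
  let ?d = "\<lambda>k. \<epsilon> k - (c / 2) * \<delta> k"
  have "?d \<in> Vsp n" using roots_in_Vsp[OF assms(1)] roots_in_Vsp[OF assms(2)] by (simp add: Vsp_def)
  then show "?d \<in> hyp n \<delta>" by (simp add: hyp_def ip_linear ip_root_self[OF assms(1)] c_def)
  show "0 < ip n ?d \<epsilon>" using c by (auto simp: ip_linear ip_root_self[OF assms(2)])
qed

lemma hyp_subset_imp_eq:
  assumes "\<delta> \<in> P" "\<epsilon> \<in> P" "hyp n \<delta> \<subseteq> hyp n \<epsilon>" shows "\<delta> = \<epsilon>"
proof (rule ccontr)
  assume "\<delta> \<noteq> \<epsilon>"
  with assms(1,2) obtain d where "d \<in> hyp n \<delta>" "0 < ip n d \<epsilon>" by (rule obtain_in_hyp_ip_pos)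
  then show False using assms(3) by (auto simp: hyp_def)
qed

lemma hyp_eq_iff: "\<delta> \<in> P \<Longrightarrow> \<epsilon> \<in> P \<Longrightarrow> hyp n \<delta> = hyp n \<epsilon> \<longleftrightarrow> \<delta> = \<epsilon>"
  using hyp_subset_imp_eq by blast

lemma rank2_span:
  assumes b1: "\<beta>1 \<in> P" and b2: "\<beta>2 \<in> P" and ne: "\<beta>1 \<noteq> \<beta>2" and dV: "\<delta> \<in> Vsp n"
    and sub: "hyp n \<beta>1 \<inter> hyp n \<beta>2 \<subseteq> hyp n \<delta>"
    and c: "c = ip n \<beta>1 \<beta>2" and u: "u = ip n \<delta> \<beta>1" and v: "v = ip n \<delta> \<beta>2"
  shows "\<delta> = (\<lambda>k. (2 * u - c * v) / (4 - c\<^sup>2) * \<beta>1 k + (2 * v - c * u) / (4 - c\<^sup>2) * \<beta>2 k)"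
proof -
  define a b where "a = (2 * u - c * v) / (4 - c\<^sup>2)" and "b = (2 * v - c * u) / (4 - c\<^sup>2)"
  have "c \<in> {-1,0,1}" "ip n \<beta>2 \<beta>1 = c"
    using ip_roots[OF b1 b2 ne] ip_commute[of n \<beta>2] unfolding c by auto
  note gram = gram2_solution[OF this(1) a_def b_def]
  define w where "w = (\<lambda>k. \<delta> k - a * \<beta>1 k - b * \<beta>2 k)"
  have ipw: "ip n w z = ip n \<delta> z - a * ip n \<beta>1 z - b * ip n \<beta>2 z" for z
    unfolding w_def by (simp add: ip_linear)
  have wV: "w \<in> Vsp n" using roots_in_Vsp[OF b1] roots_in_Vsp[OF b2] dV by (simp add: Vsp_def w_def)
  have w1: "ip n w \<beta>1 = 0" and w2: "ip n w \<beta>2 = 0"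
    using gram \<open>ip n \<beta>2 \<beta>1 = c\<close>
    by (simp_all add: ipw ip_root_self[OF b1] ip_root_self[OF b2] u v c[symmetric] algebra_simps)
  then have "ip n w \<delta> = 0" using wV sub by (auto simp: hyp_def)
  have "ip n w w = ip n \<delta> w - a * ip n \<beta>1 w - b * ip n \<beta>2 w" by (rule ipw)
  also have "\<dots> = 0" using w1 w2 \<open>ip n w \<delta> = 0\<close> by (simp add: ip_commute[of n _ w])
  finally have "ip n w w = 0" .
  then have "w = (\<lambda>k. 0)" using ip_self_eq_0_iff wV by blast
  then have "\<delta> = (\<lambda>k. a * \<beta>1 k + b * \<beta>2 k)"
    unfolding w_def by (auto simp: fun_eq_iff algebra_simps dest: fun_cong)
  then show ?thesis by (simp only: a_def b_def)
qed

lemma rank2_roots: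
  assumes b1: "\<beta>1 \<in> P" and b2: "\<beta>2 \<in> P" and ne: "\<beta>1 \<noteq> \<beta>2" and d: "\<delta> \<in> P"
    and sub: "hyp n \<beta>1 \<inter> hyp n \<beta>2 \<subseteq> hyp n \<delta>"
  shows "\<delta> \<in> {\<beta>1, \<beta>2, \<lambda>k. \<beta>1 k + \<beta>2 k, \<lambda>k. \<beta>1 k - \<beta>2 k, \<lambda>k. \<beta>2 k - \<beta>1 k}"
proof (cases "\<delta> = \<beta>1 \<or> \<delta> = \<beta>2")
  case False
  define c u v where "c = ip n \<beta>1 \<beta>2" and "u = ip n \<delta> \<beta>1" and "v = ip n \<delta> \<beta>2"
  have cuv: "c \<in> {-1,0,1}" "u \<in> {-1,0,1}" "v \<in> {-1,0,1}"
    using ip_roots[OF b1 b2 ne] ip_roots[OF d b1] ip_roots[OF d b2] False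
    unfolding c_def u_def v_def by auto
  define a b where "a = (2 * u - c * v) / (4 - c\<^sup>2)" and "b = (2 * v - c * u) / (4 - c\<^sup>2)"
  have drep: "\<delta> = (\<lambda>k. a * \<beta>1 k + b * \<beta>2 k)"
    unfolding a_def b_def by (rule rank2_span[OF b1 b2 ne roots_in_Vsp[OF d] sub c_def u_def v_def])
  have "2 = ip n \<delta> \<delta>" using ip_root_self[OF d] by simp
  also have "\<dots> = a * u + b * v"
    by (subst (2) drep) (simp add: ip_linear u_def v_def ip_commute[of n \<delta>])
  finally have "a * u + b * v = 2" by simp
  moreover have "0 < a * ip n b0 \<beta>1 + b * ip n b0 \<beta>2"
    using ip_b0_pos[OF d] by (subst (asm) drep) (simp add: ip_linear)
  ultimately have "(a = 1 \<and> b = 1) \<or> (a = 1 \<and> b = -1) \<or> (a = -1 \<and> b = 1)"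
    using rank2_coefficients[OF cuv a_def b_def] ip_b0_pos[OF b1] ip_b0_pos[OF b2] by blast
  then show ?thesis using drep by auto
qed auto

definition subroots :: "(nat \<Rightarrow> real) set \<Rightarrow> (nat \<Rightarrow> real) set \<Rightarrow> (nat \<Rightarrow> real) set" where
  "subroots H H' = {\<epsilon> \<in> P. H \<inter> H' \<subseteq> hyp n \<epsilon>}"

lemma subarr_eq: "subarr n P H H' = hyp n ` subroots H H'"
  by (auto simp: subarr_def subroots_def arr_def)

lemma subroots_cong: "H1 \<inter> H2 = H1' \<inter> H2' \<Longrightarrow> subroots H1 H2 = subroots H1' H2'"
  by (simp add: subroots_def)

lemma base2_eq_pos_cone: "base2 n P H H' = pos_cone n (subroots H H')"
proof -
  define S where "S = Vsp n - \<Union>(subarr n P H H')"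
  have S: "y \<in> S \<longleftrightarrow> y \<in> Vsp n \<and> (\<forall>\<delta>\<in>subroots H H'. ip n y \<delta> \<noteq> 0)" for y
    by (auto simp: S_def subarr_eq hyp_def)
  show ?thesis
  proof
    show "base2 n P H H' \<subseteq> pos_cone n (subroots H H')"
    proof
      fix y assume "y \<in> base2 n P H H'"
      then obtain b T where b: "b \<in> base n P" and T: "connected T" "T \<subseteq> S" "b \<in> T" "y \<in> T"
        unfolding base2_def S_def connected_component_def by blast
      have "0 < ip n y \<delta>" if \<delta>: "\<delta> \<in> subroots H H'" for \<delta>
      proof (rule connected_ip_pos[OF T(1,3) _ _ T(4)])
        show "0 < ip n b \<delta>" using b \<delta> by (auto simp: base_def subroots_def)
        show "ip n t \<delta> \<noteq> 0" if "t \<in> T" for t using T(2) that S \<delta> by blast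
      qed
      then show "y \<in> pos_cone n (subroots H H')" using T(2,4) S by (auto simp: pos_cone_def)
    qed
    have "pos_cone n (subroots H H') \<subseteq> S"
      unfolding pos_cone_def using S by (metis (mono_tags, lifting) less_irrefl mem_Collect_eq subsetI)
    moreover have "b0 \<in> pos_cone n (subroots H H')"
      using b0_in_Vsp ip_b0_pos by (simp add: pos_cone_def subroots_def)
    ultimately
    show "pos_cone n (subroots H H') \<subseteq> base2 n P H H'"
      using segment_closed_imp_connected[OF segment_closed_pos_cone] b0_in_base
      unfolding base2_def S_def connected_component_def by blast
  qed
qed

text \<open>\<open>is_wall A \<delta>\<close>: the hyperplane \<open>H\<^sub>\<delta>\<close> supports a facet of the closed cone cut out by \<open>A\<close>.\<close>

definition is_wall :: "(nat \<Rightarrow> real) set \<Rightarrow> (nat \<Rightarrow> real) \<Rightarrow> bool" where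
  "is_wall A \<delta> \<longleftrightarrow> (\<exists>p\<in>hyp n \<delta>. \<forall>\<epsilon>\<in>A - {\<delta>}. 0 < ip n p \<epsilon>)"

lemma contains_facet_imp_is_wall:
  assumes AP: "A \<subseteq> P" and dA: "\<delta> \<in> A" and facet: "contains_facet (hyp n \<delta>) (pos_cone n A)"
  shows "is_wall A \<delta>"
proof -
  obtain U p where U: "open U" "U \<inter> hyp n \<delta> \<subseteq> closure (pos_cone n A)" and p: "p \<in> U" "p \<in> hyp n \<delta>"
    using facet unfolding contains_facet_def by blast
  have nonneg: "0 \<le> ip n q \<epsilon>" if "q \<in> U" "q \<in> hyp n \<delta>" "\<epsilon> \<in> A" for q \<epsilon>
    using that U(2) closure_pos_cone_subset by blast
  have "0 < ip n p \<epsilon>" if \<epsilon>: "\<epsilon> \<in> A - {\<delta>}" for \<epsilon>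
  proof (rule ccontr)
    assume "\<not> 0 < ip n p \<epsilon>"
    then have p0: "ip n p \<epsilon> = 0" using nonneg[OF p] \<epsilon> by force
    \<comment> \<open>moving from \<open>p\<close> inside \<open>H\<^sub>\<delta>\<close> against \<open>\<epsilon>\<close> leaves the closed cone\<close>
    obtain d where d: "d \<in> hyp n \<delta>" "0 < ip n d \<epsilon>"
      using obtain_in_hyp_ip_pos[of \<delta> \<epsilon>] AP dA \<epsilon> by blast
    obtain e where e: "0 < e" "\<And>s. \<bar>s\<bar> < e \<Longrightarrow> (\<lambda>k. p k + s * d k) \<in> U"
      using open_contains_line_nbhd[OF U(1) p(1)] by blast
    let ?q = "\<lambda>k. p k + (- e / 2) * d k"
    have "?q \<in> U" using e(2)[of "- e / 2"] e(1) by simp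
    moreover have "?q \<in> hyp n \<delta>" using p(2) d(1) by (simp add: hyp_def Vsp_def ip_linear)
    ultimately have "0 \<le> ip n ?q \<epsilon>" using nonneg \<epsilon> by blast
    moreover have "ip n ?q \<epsilon> = - e / 2 * ip n d \<epsilon>" using p0 by (simp add: ip_linear)
    ultimately show False using e(1) d(2) by (simp add: mult_le_0_iff)
  qed
  then show ?thesis using p(2) unfolding is_wall_def by blast
qed

lemma is_wall_imp_contains_facet:
  assumes AP: "A \<subseteq> P" and dA: "\<delta> \<in> A" and wall: "is_wall A \<delta>"
  shows "contains_facet (hyp n \<delta>) (pos_cone n A)"
proof -
  have finA: "finite A" using finite_subset[OF AP finite_roots] .
  obtain p where p: "p \<in> hyp n \<delta>" "\<forall>\<epsilon>\<in>A - {\<delta>}. 0 < ip n p \<epsilon>"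
    using wall unfolding is_wall_def by blast
  define U where "U = {x. \<forall>\<epsilon>\<in>A - {\<delta>}. 0 < ip n x \<epsilon>}"
  have "open U" unfolding U_def using open_Collect_ip_pos finA by simp
  moreover have "p \<in> U \<inter> hyp n \<delta>" using p unfolding U_def by auto
  moreover have "x \<in> closure (pos_cone n A)" if x: "x \<in> U" "x \<in> hyp n \<delta>" for x
  proof -
    \<comment> \<open>\<open>x + s\<delta>\<close> lies in the open cone for all small \<open>s > 0\<close>\<close>
    let ?g = "\<lambda>s::real. (\<lambda>k. x k + s * \<delta> k) :: nat \<Rightarrow> real"
    have "(?g \<longlongrightarrow> ?g 0) (at 0 within UNIV)"
      using continuous_on_line[of x \<delta>] unfolding continuous_on_def by (rule bspec) simp
    then have "(?g \<longlongrightarrow> x) (at 0)" by simp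
    then have lim: "(?g \<longlongrightarrow> x) (at_right 0)" by (rule tendsto_mono[OF at_le, rotated]) simp_all
    have gV: "?g s \<in> Vsp n" for s
      using x(2) roots_in_Vsp[OF subsetD[OF AP dA]] by (simp add: hyp_def Vsp_def)
    have ev: "\<forall>\<^sub>F s in at_right 0. 0 < ip n x \<epsilon> + s * ip n \<delta> \<epsilon>" if \<epsilon>: "\<epsilon> \<in> A" for \<epsilon>
    proof (cases "\<epsilon> = \<delta>")
      case True
      then show ?thesis using x(2) ip_root_self[OF subsetD[OF AP dA]]
        by (intro eventually_at_right_pos_affine) (simp add: hyp_def)
    next
      case False
      then show ?thesis using x(1) \<epsilon> by (intro eventually_at_right_pos_affine) (simp add: U_def)
    qed
    have "\<forall>\<^sub>F s in at_right 0. \<forall>\<epsilon>\<in>A. 0 < ip n x \<epsilon> + s * ip n \<delta> \<epsilon>"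
      by (rule eventually_ball_finite[OF finA]) (use ev in blast)
    then have "\<forall>\<^sub>F s in at_right 0. ?g s \<in> pos_cone n A"
      by (rule eventually_mono) (simp add: pos_cone_def ip_linear gV)
    then have "\<forall>\<^sub>F s in at_right 0. ?g s \<in> closure (pos_cone n A)"
      by (rule eventually_mono) (use closure_subset in blast)
    then show ?thesis by (rule Lim_in_closed_set[OF closed_closure _ _ lim]) simp
  qed
  ultimately show ?thesis unfolding contains_facet_def by blast
qed

lemma basic_iff:
  assumes "\<delta> \<in> P"
  shows "hyp n \<delta> \<in> basic n P H H' \<longleftrightarrow> \<delta> \<in> subroots H H' \<and> is_wall (subroots H H') \<delta>"
proof -
  have "hyp n \<delta> \<in> subarr n P H H' \<longleftrightarrow> \<delta> \<in> subroots H H'"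
    using assms hyp_eq_iff by (auto simp: subarr_eq subroots_def)
  moreover have "subroots H H' \<subseteq> P" by (auto simp: subroots_def)
  ultimately show ?thesis
    unfolding basic_def base2_eq_pos_cone
    using contains_facet_imp_is_wall is_wall_imp_contains_facet by blast
qed

lemma ip_summands_of_root:
  assumes "x \<in> P" "y \<in> P" "(\<lambda>k. x k + y k) \<in> P"
  shows "ip n x y = -1"
  using ip_root_self[OF assms(3)] ip_root_self[OF assms(1)] ip_root_self[OF assms(2)]
  by (simp add: ip_linear ip_commute[of n y x])

lemma subroots_of_summands:
  assumes x: "x \<in> P" and y: "y \<in> P" and s: "(\<lambda>k. x k + y k) \<in> P"
  shows "subroots (hyp n x) (hyp n y) = {x, y, \<lambda>k. x k + y k}"
proof -
  have c: "ip n x y = -1" "ip n y x = -1"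
    using ip_summands_of_root[OF assms] ip_commute by metis+
  have "x \<noteq> y" using c ip_root_self[OF x] by auto
  \<comment> \<open>the differences have squared length 6, so they are not roots\<close>
  have "(\<lambda>k. x k - y k) \<notin> P" "(\<lambda>k. y k - x k) \<notin> P"
    using c ip_root_self[OF x] ip_root_self[OF y] ip_root_self
    by (force simp: ip_linear)+
  then show ?thesis
    using rank2_roots[OF x y \<open>x \<noteq> y\<close>] x y s hyp_Int_subset_hyp_add[of n x y]
    by (auto simp: subroots_def)
qed

lemma is_wall_summand:
  assumes x: "x \<in> P" and y: "y \<in> P" and s: "(\<lambda>k. x k + y k) \<in> P"
  shows "is_wall {x, y, \<lambda>k. x k + y k} x"
  unfolding is_wall_def
proof
  have c: "ip n x y = -1" "ip n y x = -1"
    using ip_summands_of_root[OF assms] ip_commute by metis+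
  let ?p = "\<lambda>k. y k + x k / 2"
  show "?p \<in> hyp n x"
    using roots_in_Vsp[OF x] roots_in_Vsp[OF y] c ip_root_self[OF x]
    by (simp add: hyp_def Vsp_def ip_linear)
  show "\<forall>\<epsilon>\<in>{x, y, \<lambda>k. x k + y k} - {x}. 0 < ip n ?p \<epsilon>"
    using c ip_root_self[OF x] ip_root_self[OF y] by (auto simp: ip_linear)
qed

lemma not_is_wall_sum:
  assumes "x \<in> P" "y \<in> P" "(\<lambda>k. x k + y k) \<in> P"
  shows "\<not> is_wall {x, y, \<lambda>k. x k + y k} (\<lambda>k. x k + y k)"
proof
  have "x \<noteq> (\<lambda>k. x k + y k)"
  proof
    assume "x = (\<lambda>k. x k + y k)"
    then have "y = (\<lambda>k. 0)" by (auto simp: fun_eq_iff dest: fun_cong)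
    then show False using ip_root_self[OF assms(2)] by (simp add: ip_zero_left)
  qed
  moreover have "y \<noteq> (\<lambda>k. x k + y k)"
  proof
    assume "y = (\<lambda>k. x k + y k)"
    then have "x = (\<lambda>k. 0)" by (auto simp: fun_eq_iff dest: fun_cong)
    then show False using ip_root_self[OF assms(1)] by (simp add: ip_zero_left)
  qed
  moreover assume "is_wall {x, y, \<lambda>k. x k + y k} (\<lambda>k. x k + y k)"
  ultimately obtain p where "ip n p (\<lambda>k. x k + y k) = 0" "0 < ip n p x" "0 < ip n p y"
    unfolding is_wall_def hyp_def by auto
  then show False by (simp add: ip_linear)
qed

lemma is_wall_pair:
  assumes "\<beta>1 \<in> P" "\<beta>2 \<in> P" "\<beta>1 \<noteq> \<beta>2" "A \<subseteq> {\<beta>1, \<beta>2}"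
  shows "is_wall A \<beta>1"
proof -
  obtain d where "d \<in> hyp n \<beta>1" "0 < ip n d \<beta>2"
    using obtain_in_hyp_ip_pos[OF assms(1-3)] .
  then show ?thesis using assms(4) unfolding is_wall_def by blast
qed

lemma subroots_cases:
  assumes b1: "\<beta>1 \<in> P" and b2: "\<beta>2 \<in> P" and ne: "\<beta>1 \<noteq> \<beta>2"
  obtains "subroots (hyp n \<beta>1) (hyp n \<beta>2) \<subseteq> {\<beta>1, \<beta>2}"
    | x y where "x \<in> P" "y \<in> P" "(\<lambda>k. x k + y k) \<in> P"
        "subroots (hyp n \<beta>1) (hyp n \<beta>2) = {x, y, \<lambda>k. x k + y k}"
proof -
  let ?d1 = "\<lambda>k. \<beta>1 k - \<beta>2 k" and ?d2 = "\<lambda>k. \<beta>2 k - \<beta>1 k"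
  consider "(\<lambda>k. \<beta>1 k + \<beta>2 k) \<in> P" | "?d1 \<in> P" | "?d2 \<in> P"
    | "subroots (hyp n \<beta>1) (hyp n \<beta>2) \<subseteq> {\<beta>1, \<beta>2}"
    using rank2_roots[OF b1 b2 ne] by (auto simp: subroots_def)
  then show ?thesis
  proof cases
    case 1
    then show ?thesis using that(2) subroots_of_summands[OF b1 b2] b1 b2 by blast
  next
    case 2
    have "(\<lambda>k. ?d1 k + \<beta>2 k) = \<beta>1" by simp
    moreover have "subroots (hyp n \<beta>1) (hyp n \<beta>2) = subroots (hyp n ?d1) (hyp n \<beta>2)"
      by (rule subroots_cong) (rule hyp_Int_diff)
    ultimately show ?thesis
      using that(2)[of ?d1 \<beta>2] subroots_of_summands[OF 2 b2] 2 b1 b2 by simp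
  next
    case 3
    have "(\<lambda>k. ?d2 k + \<beta>1 k) = \<beta>2" by simp
    moreover have "subroots (hyp n \<beta>1) (hyp n \<beta>2) = subroots (hyp n ?d2) (hyp n \<beta>1)"
      by (rule subroots_cong) (use hyp_Int_diff in blast)
    ultimately show ?thesis
      using that(2)[of ?d2 \<beta>1] subroots_of_summands[OF 3 b1] 3 b1 b2 by simp
  qed (rule that(1))
qed

lemma cuts_imp_diff_in_roots:
  assumes aP: "\<alpha> \<in> P" and gP: "\<gamma> \<in> P" and cuts: "cuts n P (hyp n \<alpha>) (hyp n \<gamma>)"
  shows "(\<lambda>k. \<gamma> k - \<alpha> k) \<in> P"
proof -
  from cuts obtain \<beta>1 \<beta>2 where b: "\<beta>1 \<in> P" "\<beta>2 \<in> P" "\<beta>1 \<noteq> \<beta>2"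
      and "hyp n \<gamma> \<in> subarr n P (hyp n \<beta>1) (hyp n \<beta>2)"
      and "hyp n \<gamma> \<notin> basic n P (hyp n \<beta>1) (hyp n \<beta>2)"
      and "hyp n \<alpha> \<in> basic n P (hyp n \<beta>1) (hyp n \<beta>2)"
    unfolding cuts_def arr_def by blast
  moreover note basic_iff[OF gP] basic_iff[OF aP]
  moreover have "\<gamma> \<in> subroots (hyp n \<beta>1) (hyp n \<beta>2)"
    using \<open>hyp n \<gamma> \<in> subarr n P _ _\<close> gP hyp_eq_iff by (auto simp: subarr_eq subroots_def)
  ultimately have \<gamma>: "\<gamma> \<in> subroots (hyp n \<beta>1) (hyp n \<beta>2)" "\<not> is_wall (subroots (hyp n \<beta>1) (hyp n \<beta>2)) \<gamma>"
    and \<alpha>: "\<alpha> \<in> subroots (hyp n \<beta>1) (hyp n \<beta>2)" "is_wall (subroots (hyp n \<beta>1) (hyp n \<beta>2)) \<alpha>"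
    by blast+
  from b(1-3) show "(\<lambda>k. \<gamma> k - \<alpha> k) \<in> P"
  proof (cases rule: subroots_cases)
    case 1
    then show ?thesis
      using \<gamma> is_wall_pair[OF b(1-3)] is_wall_pair[OF b(2,1) b(3)[symmetric]] by (auto simp: insert_commute)
  next
    case (2 x y)
    have "is_wall {x, y, \<lambda>k. x k + y k} y"
      using is_wall_summand[OF 2(2,1)] 2(3) by (simp add: add.commute insert_commute)
    then have "\<gamma> = (\<lambda>k. x k + y k)" "\<alpha> \<in> {x, y}"
      using \<gamma> \<alpha> 2(4) is_wall_summand[OF 2(1-3)] not_is_wall_sum[OF 2(1-3)] by auto
    then show ?thesis using 2(1,2) by auto
  qed
qed

lemma diff_in_roots_imp_cuts:
  assumes aP: "\<alpha> \<in> P" and gP: "\<gamma> \<in> P" and bP: "(\<lambda>k. \<gamma> k - \<alpha> k) \<in> P"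
  shows "cuts n P (hyp n \<alpha>) (hyp n \<gamma>)"
proof -
  let ?b = "\<lambda>k. \<gamma> k - \<alpha> k"
  have g: "\<gamma> = (\<lambda>k. \<alpha> k + ?b k)" by simp
  then have sP: "(\<lambda>k. \<alpha> k + ?b k) \<in> P" using gP by simp
  have A: "subroots (hyp n \<alpha>) (hyp n ?b) = {\<alpha>, ?b, \<lambda>k. \<alpha> k + ?b k}"
    by (rule subroots_of_summands[OF aP bP sP])
  have "\<alpha> \<noteq> ?b" using ip_summands_of_root[OF aP bP sP] ip_root_self[OF aP] by auto
  then have "hyp n \<alpha> \<noteq> hyp n ?b" using hyp_eq_iff[OF aP bP] by simp
  moreover have "hyp n \<gamma> \<in> subarr n P (hyp n \<alpha>) (hyp n ?b)"
    by (subst g) (auto simp: subarr_eq A)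
  moreover have "hyp n \<gamma> \<notin> basic n P (hyp n \<alpha>) (hyp n ?b)"
    using basic_iff[OF gP] not_is_wall_sum[OF aP bP sP] A g by simp
  moreover have "hyp n \<alpha> \<in> basic n P (hyp n \<alpha>) (hyp n ?b)"
    using basic_iff[OF aP] is_wall_summand[OF aP bP sP] A by simp
  ultimately show "cuts n P (hyp n \<alpha>) (hyp n \<gamma>)"
    unfolding cuts_def arr_def using aP bP by blast
qed

lemma cuts_iff: "\<alpha> \<in> P \<Longrightarrow> \<gamma> \<in> P \<Longrightarrow> cuts n P (hyp n \<alpha>) (hyp n \<gamma>) \<longleftrightarrow> (\<lambda>k. \<gamma> k - \<alpha> k) \<in> P"
  using cuts_imp_diff_in_roots diff_in_roots_imp_cuts by blast

definition cut_roots :: "(nat \<Rightarrow> real) \<Rightarrow> (nat \<Rightarrow> real) set" where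
  "cut_roots \<gamma> = {\<alpha> \<in> P. (\<lambda>k. \<gamma> k - \<alpha> k) \<in> P}"

lemma finite_cut_roots: "finite (cut_roots \<gamma>)"
  using finite_roots by (simp add: cut_roots_def)

lemma cutting_eq: "\<gamma> \<in> P \<Longrightarrow> cutting n P (hyp n \<gamma>) = hyp n ` cut_roots \<gamma>"
  unfolding cutting_def arr_def cut_roots_def using cuts_iff by auto

definition cut_complement :: "(nat \<Rightarrow> real) \<Rightarrow> (nat \<Rightarrow> real) set" where
  "cut_complement \<gamma> = {x \<in> hyp n \<gamma>. \<forall>\<alpha>\<in>cut_roots \<gamma>. ip n x \<alpha> \<noteq> 0}"

lemma shard_complement_eq:
  assumes "\<gamma> \<in> P"
  shows "hyp n \<gamma> - \<Union>{hyp n \<gamma> \<inter> G | G. G \<in> cutting n P (hyp n \<gamma>)} = cut_complement \<gamma>"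
  unfolding cutting_eq[OF assms] cut_complement_def by (auto simp: hyp_def)

lemma cut_root_ip:
  assumes "\<gamma> \<in> P" "\<alpha> \<in> cut_roots \<gamma>"
  shows "ip n \<gamma> \<alpha> = 1" "ip n b0 \<alpha> < ip n b0 \<gamma>"
proof -
  have "\<alpha> \<in> P" "(\<lambda>k. \<gamma> k - \<alpha> k) \<in> P" using assms(2) by (auto simp: cut_roots_def)
  then show "ip n \<gamma> \<alpha> = 1" "ip n b0 \<alpha> < ip n b0 \<gamma>"
    using ip_root_self[of "\<lambda>k. \<gamma> k - \<alpha> k"] ip_root_self[OF assms(1)] ip_root_self[of \<alpha>]
      ip_b0_pos[of "\<lambda>k. \<gamma> k - \<alpha> k"]
    by (simp_all add: ip_linear ip_commute[of n \<alpha> \<gamma>])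
qed

lemma shards_of_eq: "\<gamma> \<in> P \<Longrightarrow> shards_of n P (hyp n \<gamma>) = closure ` components (cut_complement \<gamma>)"
  by (simp add: shards_of_def shard_complement_eq)

lemma finite_shards_of:
  assumes "\<gamma> \<in> P" shows "finite (shards_of n P (hyp n \<gamma>))"
proof -
  have "bij_betw (\<lambda>\<sigma>. closure {y \<in> cut_complement \<gamma>. sign_vector n (\<lambda>\<alpha>. \<alpha>) (cut_roots \<gamma>) y = \<sigma>})
      (sign_vector n (\<lambda>\<alpha>. \<alpha>) (cut_roots \<gamma>) ` cut_complement \<gamma>) (shards_of n P (hyp n \<gamma>))"
    unfolding shards_of_eq[OF assms] cut_complement_def
    by (rule sign_vector_cells(1)[OF finite_cut_roots])
  then show ?thesis using finite_sign_vectors[OF finite_cut_roots] bij_betw_finite by blast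
qed

lemma shard_subset_hyp: "X \<in> shards_of n P (hyp n \<gamma>) \<Longrightarrow> X \<subseteq> hyp n \<gamma>"
  unfolding shards_of_def
  by (auto dest!: in_components_subset intro: closure_minimal[OF _ closed_hyp, THEN subsetD])

lemma relatively_open_subset_hyp_imp_eq:
  assumes "\<delta> \<in> P" "\<epsilon> \<in> P" "open Q" "hyp n \<delta> \<inter> Q \<noteq> {}" "hyp n \<delta> \<inter> Q \<subseteq> hyp n \<epsilon>"
  shows "\<delta> = \<epsilon>"
proof (rule ccontr)
  assume "\<delta> \<noteq> \<epsilon>"
  obtain p where p: "p \<in> hyp n \<delta>" "p \<in> Q" using assms(4) by blast
  obtain d where d: "d \<in> hyp n \<delta>" "0 < ip n d \<epsilon>"
    using obtain_in_hyp_ip_pos[OF assms(1,2) \<open>\<delta> \<noteq> \<epsilon>\<close>] .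
  obtain e where e: "0 < e" "\<And>s. \<bar>s\<bar> < e \<Longrightarrow> (\<lambda>k. p k + s * d k) \<in> Q"
    using open_contains_line_nbhd[OF assms(3) p(2)] by blast
  let ?q = "\<lambda>k. p k + (e / 2) * d k"
  have "?q \<in> hyp n \<delta> \<inter> Q"
    using p(1) d(1) e(2)[of "e / 2"] e(1) by (simp add: hyp_def Vsp_def ip_linear)
  then have "ip n ?q \<epsilon> = 0" using assms(5) by (auto simp: hyp_def)
  moreover have "p \<in> hyp n \<epsilon>" using p assms(5) by blast
  then have "ip n ?q \<epsilon> = e / 2 * ip n d \<epsilon>" by (simp add: hyp_def ip_linear)
  ultimately show False using e(1) d(2) by simp
qed

lemma shards_of_disjoint:
  assumes "\<delta> \<in> P" "\<epsilon> \<in> P" "\<delta> \<noteq> \<epsilon>"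
  shows "shards_of n P (hyp n \<delta>) \<inter> shards_of n P (hyp n \<epsilon>) = {}"
proof (rule ccontr)
  assume "shards_of n P (hyp n \<delta>) \<inter> shards_of n P (hyp n \<epsilon>) \<noteq> {}"
  then obtain X where X: "X \<in> shards_of n P (hyp n \<delta>)" "X \<in> shards_of n P (hyp n \<epsilon>)" by blast
  then obtain c where c: "c \<in> components (cut_complement \<delta>)" and "X = closure c"
    unfolding shards_of_eq[OF assms(1)] by blast
  obtain Q where Q: "open Q" "c = hyp n \<delta> \<inter> Q" "c \<noteq> {}"
    using sign_vector_cells(2)[where w = "\<lambda>\<alpha>. \<alpha>", OF finite_cut_roots c[unfolded cut_complement_def]]
    by (elim exE conjE)
  have "hyp n \<delta> \<inter> Q \<subseteq> hyp n \<epsilon>"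
    using shard_subset_hyp[OF X(2)] closure_subset[of c] \<open>X = closure c\<close> Q(2) by blast
  then show False using relatively_open_subset_hyp_imp_eq[OF assms(1,2) Q(1)] Q(2,3) assms(3) by blast
qed

lemma card_shards:
  "finite (shards n P)" "card (shards n P) = (\<Sum>\<gamma>\<in>P. card (shards_of n P (hyp n \<gamma>)))"
proof -
  have "shards n P = (\<Union>\<gamma>\<in>P. shards_of n P (hyp n \<gamma>))" by (simp add: shards_def arr_def)
  then show "finite (shards n P)" "card (shards n P) = (\<Sum>\<gamma>\<in>P. card (shards_of n P (hyp n \<gamma>)))"
    using finite_roots finite_shards_of shards_of_disjoint by (simp_all add: card_UN_disjoint)
qed

end

section \<open>Type \<open>D\<^sub>n\<close>\<close>

definition diff_root :: "nat \<Rightarrow> nat \<Rightarrow> nat \<Rightarrow> real" where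
  "diff_root i j = (\<lambda>k. eps j k - eps i k)"

definition sum_root :: "nat \<Rightarrow> nat \<Rightarrow> nat \<Rightarrow> real" where
  "sum_root i j = (\<lambda>k. eps j k + eps i k)"

definition index_pairs :: "nat \<Rightarrow> (nat \<times> nat) set" where
  "index_pairs n = {(i, j). 1 \<le> i \<and> i < j \<and> j \<le> n}"

lemma diff_root_apply: "diff_root i j k = (if k = j then 1 else 0) - (if k = i then 1 else 0)"
  by (simp add: diff_root_def eps_def)

lemma sum_root_apply: "sum_root i j k = (if k = j then 1 else 0) + (if k = i then 1 else 0)"
  by (simp add: sum_root_def eps_def)

lemma ip_diff_root: "1 \<le> i \<Longrightarrow> i \<le> n \<Longrightarrow> 1 \<le> j \<Longrightarrow> j \<le> n \<Longrightarrow> ip n x (diff_root i j) = x j - x i"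
  using ip_eps[of j n x] ip_eps[of i n x] by (simp add: diff_root_def ip_diff_right)

lemma ip_sum_root: "1 \<le> i \<Longrightarrow> i \<le> n \<Longrightarrow> 1 \<le> j \<Longrightarrow> j \<le> n \<Longrightarrow> ip n x (sum_root i j) = x j + x i"
  using ip_eps[of j n x] ip_eps[of i n x] by (simp add: sum_root_def ip_add_right)

lemma diff_root_eq_iff:
  assumes "k < l" "i < j"
  shows "diff_root k l = diff_root i j \<longleftrightarrow> k = i \<and> l = j"
proof
  assume eq: "diff_root k l = diff_root i j"
  then have "diff_root k l k = diff_root i j k" "diff_root k l l = diff_root i j l" by simp_all
  then show "k = i \<and> l = j" using assms by (auto simp: diff_root_apply split: if_splits)
qed simp

lemma sum_root_eq_iff:
  assumes "k < l" "i < j"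
  shows "sum_root k l = sum_root i j \<longleftrightarrow> k = i \<and> l = j"
proof
  assume eq: "sum_root k l = sum_root i j"
  then have "sum_root k l k = sum_root i j k" "sum_root k l l = sum_root i j l"
    "sum_root k l i = sum_root i j i" "sum_root k l j = sum_root i j j" by simp_all
  then show "k = i \<and> l = j" using assms by (auto simp: sum_root_apply split: if_splits)
qed simp

lemma diff_root_ne_sum_root: "i < j \<Longrightarrow> diff_root k l \<noteq> sum_root i j"
proof
  assume "i < j" "diff_root k l = sum_root i j"
  then have "diff_root k l i = sum_root i j i" "diff_root k l j = sum_root i j j" by simp_all
  then show False using \<open>i < j\<close> by (auto simp: diff_root_apply sum_root_apply split: if_splits)
qed

lemma finite_index_pairs: "finite (index_pairs n)"
  by (rule finite_subset[of _ "{1..n} \<times> {1..n}"]) (auto simp: index_pairs_def)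

lemma posD_alt:
  "posD n = {diff_root i j | i j. 1 \<le> i \<and> i < j \<and> j \<le> n} \<union> {sum_root i j | i j. 1 \<le> i \<and> i < j \<and> j \<le> n}"
  by (simp add: posD_def diff_root_def sum_root_def)

lemma posD_eq:
  "posD n = (\<lambda>(i, j). diff_root i j) ` index_pairs n \<union> (\<lambda>(i, j). sum_root i j) ` index_pairs n"
  unfolding posD_alt index_pairs_def by auto

lemma posD_cases:
  assumes "\<delta> \<in> posD n"
  obtains i j where "1 \<le> i" "i < j" "j \<le> n" "\<delta> = diff_root i j"
        | i j where "1 \<le> i" "i < j" "j \<le> n" "\<delta> = sum_root i j"
  using assms unfolding posD_alt by blast

lemma diff_root_in_posD: "1 \<le> i \<Longrightarrow> i < j \<Longrightarrow> j \<le> n \<Longrightarrow> diff_root i j \<in> posD n"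
  unfolding posD_alt by blast

lemma sum_root_in_posD: "1 \<le> i \<Longrightarrow> i < j \<Longrightarrow> j \<le> n \<Longrightarrow> sum_root i j \<in> posD n"
  unfolding posD_alt by blast

lemma Hm_eq_hyp: "1 \<le> i \<Longrightarrow> i < j \<Longrightarrow> j \<le> n \<Longrightarrow> Hm n i j = hyp n (diff_root i j)"
  by (auto simp: Hm_def hyp_def ip_diff_root)

lemma Hp_eq_hyp: "1 \<le> i \<Longrightarrow> i < j \<Longrightarrow> j \<le> n \<Longrightarrow> Hp n i j = hyp n (sum_root i j)"
  by (auto simp: Hp_def hyp_def ip_sum_root)

text \<open>The point \<open>(1, 2, \<dots>, n)\<close> lies in the base region \<open>-x\<^sub>2 < \<plusminus>x\<^sub>1 < x\<^sub>2 < \<dots> < x\<^sub>n\<close>.\<close>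

definition staircase :: "nat \<Rightarrow> nat \<Rightarrow> real" where
  "staircase n = (\<lambda>k. if 1 \<le> k \<and> k \<le> n then real k else 0)"

interpretation typeD: simply_laced_system n "posD n" "staircase n"
proof
  show "finite (posD n)" unfolding posD_eq using finite_index_pairs by simp
next
  fix \<delta> assume "\<delta> \<in> posD n"
  then show "\<delta> \<in> Vsp n"
    by (cases rule: posD_cases) (auto simp: Vsp_def diff_root_apply sum_root_apply)
next
  fix \<delta> assume "\<delta> \<in> posD n"
  then show "ip n \<delta> \<delta> = 2"
    by (cases rule: posD_cases) (auto simp: ip_diff_root ip_sum_root diff_root_apply sum_root_apply)
next
  fix \<delta> \<epsilon> assume d: "\<delta> \<in> posD n" and e: "\<epsilon> \<in> posD n" and ne: "\<delta> \<noteq> \<epsilon>"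
  from e show "ip n \<delta> \<epsilon> \<in> {-1,0,1}"
  proof (cases rule: posD_cases)
    case (1 i j)
    from d show ?thesis
      by (cases rule: posD_cases)
        (use 1 ne in \<open>auto simp: ip_diff_root diff_root_apply sum_root_apply split: if_splits\<close>)
  next
    case (2 i j)
    from d show ?thesis
      by (cases rule: posD_cases)
        (use 2 ne in \<open>auto simp: ip_sum_root diff_root_apply sum_root_apply split: if_splits\<close>)
  qed
next
  show "staircase n \<in> Vsp n" by (auto simp: staircase_def Vsp_def)
next
  fix \<delta> assume "\<delta> \<in> posD n"
  then show "0 < ip n (staircase n) \<delta>"
    by (cases rule: posD_cases) (auto simp: ip_diff_root ip_sum_root staircase_def)
qed

definition Hm_complement :: "nat \<Rightarrow> nat \<Rightarrow> nat \<Rightarrow> (nat \<Rightarrow> real) set" where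
  "Hm_complement n i j = {x \<in> hyp n (diff_root i j). \<forall>k\<in>{i<..<j}. ip n x (diff_root i k) \<noteq> 0}"

lemma cut_complement_Hm_subset:
  assumes ij: "1 \<le> i" "i < j" "j \<le> n"
  shows "typeD.cut_complement n (diff_root i j) \<subseteq> Hm_complement n i j"
proof
  fix x assume "x \<in> typeD.cut_complement n (diff_root i j)"
  then have x: "x \<in> hyp n (diff_root i j)"
    and nz: "\<And>\<alpha>. \<alpha> \<in> typeD.cut_roots n (diff_root i j) \<Longrightarrow> ip n x \<alpha> \<noteq> 0"
    by (auto simp: typeD.cut_complement_def)
  have "ip n x (diff_root i k) \<noteq> 0" if k: "i < k" "k < j" for k
  proof -
    \<comment> \<open>\<open>\<epsilon>\<^sub>j - \<epsilon>\<^sub>k\<close> is a cut root of \<open>\<epsilon>\<^sub>j - \<epsilon>\<^sub>i\<close>\<close>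
    have "(\<lambda>m. diff_root i j m - diff_root k j m) = diff_root i k"
      using k by (auto simp: fun_eq_iff diff_root_apply)
    then have "ip n x (diff_root k j) \<noteq> 0"
      using nz k ij diff_root_in_posD by (simp add: typeD.cut_roots_def)
    moreover have "x i = x j" using x ij by (simp add: hyp_def ip_diff_root)
    ultimately show ?thesis using k ij by (simp add: ip_diff_root)
  qed
  then show "x \<in> Hm_complement n i j" using x by (simp add: Hm_complement_def)
qed

lemma Hm_complement_subset:
  assumes ij: "1 \<le> i" "i < j" "j \<le> n"
  shows "Hm_complement n i j \<subseteq> typeD.cut_complement n (diff_root i j)"
proof
  fix x assume "x \<in> Hm_complement n i j"
  then have x: "x \<in> hyp n (diff_root i j)" "\<forall>k\<in>{i<..<j}. ip n x (diff_root i k) \<noteq> 0"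
    by (simp_all add: Hm_complement_def)
  have xij: "x i = x j" using x(1) ij by (simp add: hyp_def ip_diff_root)
  have xk: "x k \<noteq> x i" if "i < k" "k < j" for k using x(2) that ij by (auto simp: ip_diff_root)
  have "ip n x \<alpha> \<noteq> 0" if \<alpha>: "\<alpha> \<in> typeD.cut_roots n (diff_root i j)" for \<alpha>
  proof
    assume z: "ip n x \<alpha> = 0"
    \<comment> \<open>a cut root has inner product 1 with \<open>\<epsilon>\<^sub>j - \<epsilon>\<^sub>i\<close> and is lower than it, hence of the form
      \<open>\<epsilon>\<^sub>k - \<epsilon>\<^sub>i\<close> or \<open>\<epsilon>\<^sub>j - \<epsilon>\<^sub>k\<close> with \<open>i < k < j\<close>\<close>
    note cut = typeD.cut_root_ip[OF diff_root_in_posD[OF ij] \<alpha>]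
    have "\<alpha> \<in> posD n" using \<alpha> by (simp add: typeD.cut_roots_def)
    then show False
    proof (cases rule: posD_cases)
      case (1 k l)
      have "diff_root i j l - diff_root i j k = 1" "real l - real k < real j - real i"
        using cut 1 ij by (auto simp: ip_diff_root staircase_def)
      moreover have "x l - x k = 0" using z 1 by (simp add: ip_diff_root)
      ultimately show False using xk xij 1 ij by (auto simp: diff_root_apply split: if_splits)
    next
      case (2 k l)
      have "diff_root i j l + diff_root i j k = 1" "real l + real k < real j - real i"
        using cut 2 ij by (auto simp: ip_sum_root ip_diff_root staircase_def)
      then show False using 2 ij by (auto simp: diff_root_apply split: if_splits)
    qed
  qed
  then show "x \<in> typeD.cut_complement n (diff_root i j)" using x(1) by (simp add: typeD.cut_complement_def)
qed

lemma shards_of_Hm: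
  assumes ij: "1 \<le> i" "i < j" "j \<le> n"
  shows "shards_of n (posD n) (Hm n i j) = closure ` components (Hm_complement n i j)"
proof -
  have "typeD.cut_complement n (diff_root i j) = Hm_complement n i j"
    using cut_complement_Hm_subset[OF ij] Hm_complement_subset[OF ij] by (rule subset_antisym)
  then show ?thesis using typeD.shards_of_eq[OF diff_root_in_posD[OF ij]] Hm_eq_hyp[OF ij] by simp
qed

lemma card_shards_Hm:
  assumes ij: "1 \<le> i" "i < j" "j \<le> n"
  shows "finite (shards_of n (posD n) (Hm n i j))"
    and "card (shards_of n (posD n) (Hm n i j)) = 2 ^ (j - i - 1)"
proof -
  let ?I = "{i<..<j}" and ?w = "diff_root i"
  let ?S = "Hm_complement n i j"
  have ipk: "ip n x (diff_root i k) = x k - x i" if "k \<in> ?I" for x k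
    using that ij by (intro ip_diff_root) auto
  have bij: "bij_betw (\<lambda>\<sigma>. closure {y\<in>?S. sign_vector n ?w ?I y = \<sigma>}) (sign_vector n ?w ?I ` ?S)
      (shards_of n (posD n) (Hm n i j))"
    unfolding shards_of_Hm[OF ij] Hm_complement_def by (rule sign_vector_cells(1)) simp
  have "sign_vector n ?w ?I ` ?S = PiE ?I (\<lambda>_. UNIV)"
  proof
    show "sign_vector n ?w ?I ` ?S \<subseteq> PiE ?I (\<lambda>_. UNIV)" by (auto simp: sign_vector_def)
    show "PiE ?I (\<lambda>_. UNIV) \<subseteq> sign_vector n ?w ?I ` ?S"
    proof
      fix \<sigma> :: "nat \<Rightarrow> bool" assume \<sigma>: "\<sigma> \<in> PiE ?I (\<lambda>_. UNIV)"
      define x where "x m = (if m \<in> ?I then (if \<sigma> m then 1 else -1) else (0::real))" for m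
      have "x \<in> ?S" using ij by (auto simp: Hm_complement_def x_def Vsp_def hyp_def ip_diff_root ipk)
      moreover have "sign_vector n ?w ?I x = \<sigma>"
        using \<sigma> by (auto simp: sign_vector_def x_def ipk fun_eq_iff restrict_def PiE_def extensional_def)
      ultimately show "\<sigma> \<in> sign_vector n ?w ?I ` ?S" by blast
    qed
  qed
  then have "finite (sign_vector n ?w ?I ` ?S)" "card (sign_vector n ?w ?I ` ?S) = 2 ^ (j - i - 1)"
    by (simp_all add: card_PiE finite_PiE)
  with bij show "finite (shards_of n (posD n) (Hm n i j))"
    "card (shards_of n (posD n) (Hm n i j)) = 2 ^ (j - i - 1)"
    by (simp_all add: bij_betw_finite bij_betw_same_card[symmetric])
qed

definition Hp_complement :: "nat \<Rightarrow> nat \<Rightarrow> nat \<Rightarrow> (nat \<Rightarrow> real) set" where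
  "Hp_complement n i j = {x \<in> hyp n (sum_root i j).
     (\<forall>k\<in>{1..<j} - {i}. x k \<noteq> x j) \<and> (\<forall>k\<in>{1..<i}. x k \<noteq> - x j)}"

lemma cut_complement_Hp_subset:
  assumes ij: "1 \<le> i" "i < j" "j \<le> n"
  shows "typeD.cut_complement n (sum_root i j) \<subseteq> Hp_complement n i j"
proof
  fix x assume "x \<in> typeD.cut_complement n (sum_root i j)"
  then have x: "x \<in> hyp n (sum_root i j)"
    and nz: "\<And>\<alpha>. \<alpha> \<in> posD n \<Longrightarrow> (\<lambda>k. sum_root i j k - \<alpha> k) \<in> posD n \<Longrightarrow> ip n x \<alpha> \<noteq> 0"
    by (auto simp: typeD.cut_complement_def typeD.cut_roots_def)
  have "x k \<noteq> x j" if k: "k \<in> {1..<j} - {i}" for k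
  proof -
    have "(\<lambda>m. sum_root i j m - diff_root k j m) = (if k < i then sum_root k i else sum_root i k)"
      using k by (auto simp: fun_eq_iff diff_root_apply sum_root_apply)
    then have "(\<lambda>m. sum_root i j m - diff_root k j m) \<in> posD n"
      using k ij sum_root_in_posD by auto
    then have "ip n x (diff_root k j) \<noteq> 0" using nz diff_root_in_posD k ij by simp
    then show ?thesis using k ij by (simp add: ip_diff_root)
  qed
  moreover have "x k \<noteq> - x j" if k: "k \<in> {1..<i}" for k
  proof -
    have "(\<lambda>m. sum_root i j m - sum_root k j m) = diff_root k i"
      using k by (auto simp: fun_eq_iff diff_root_apply sum_root_apply)
    then have "ip n x (sum_root k j) \<noteq> 0" using nz k ij diff_root_in_posD sum_root_in_posD by simp
    then show ?thesis using k ij by (simp add: ip_sum_root)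
  qed
  ultimately show "x \<in> Hp_complement n i j" using x by (simp add: Hp_complement_def)
qed

lemma Hp_complement_subset:
  assumes ij: "1 \<le> i" "i < j" "j \<le> n"
  shows "Hp_complement n i j \<subseteq> typeD.cut_complement n (sum_root i j)"
proof
  fix x assume "x \<in> Hp_complement n i j"
  then have x: "x \<in> hyp n (sum_root i j)" and xk: "\<forall>k. 1 \<le> k \<and> k < j \<and> k \<noteq> i \<longrightarrow> x k \<noteq> x j"
    and xk2: "\<forall>k. 1 \<le> k \<and> k < i \<longrightarrow> x k \<noteq> - x j"
    by (auto simp: Hp_complement_def)
  have xij: "x i = - x j" using x ij by (simp add: hyp_def ip_sum_root)
  have "ip n x \<alpha> \<noteq> 0" if \<alpha>: "\<alpha> \<in> typeD.cut_roots n (sum_root i j)" for \<alpha>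
  proof
    assume z: "ip n x \<alpha> = 0"
    note cut = typeD.cut_root_ip[OF sum_root_in_posD[OF ij] \<alpha>]
    have "\<alpha> \<in> posD n" using \<alpha> by (simp add: typeD.cut_roots_def)
    then show False
    proof (cases rule: posD_cases)
      case (1 k l)
      have "sum_root i j l - sum_root i j k = 1" "real l - real k < real j + real i"
        using cut 1 ij by (auto simp: ip_diff_root ip_sum_root staircase_def)
      moreover have "x l - x k = 0" using z 1 by (simp add: ip_diff_root)
      ultimately show False using xk xk2 xij 1 ij by (auto simp: sum_root_apply split: if_splits)
    next
      case (2 k l)
      have "sum_root i j l + sum_root i j k = 1" "real l + real k < real j + real i"
        using cut 2 ij by (auto simp: ip_sum_root staircase_def)
      moreover have "x l + x k = 0" using z 2 by (simp add: ip_sum_root)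
      ultimately show False using xk xk2 xij 2 ij by (auto simp: sum_root_apply split: if_splits)
    qed
  qed
  then show "x \<in> typeD.cut_complement n (sum_root i j)" using x by (simp add: typeD.cut_complement_def)
qed

lemma shards_of_Hp:
  assumes ij: "1 \<le> i" "i < j" "j \<le> n"
  shows "shards_of n (posD n) (Hp n i j) = closure ` components (Hp_complement n i j)"
proof -
  have "typeD.cut_complement n (sum_root i j) = Hp_complement n i j"
    using cut_complement_Hp_subset[OF ij] Hp_complement_subset[OF ij] by (rule subset_antisym)
  then show ?thesis using typeD.shards_of_eq[OF sum_root_in_posD[OF ij]] Hp_eq_hyp[OF ij] by simp
qed

text \<open>For \<open>k < i\<close> the label records the position of \<open>x\<^sub>k\<close> relative to both \<open>x\<^sub>j\<close> and \<open>-x\<^sub>j\<close>;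
  for \<open>i < k < j\<close> its second component merely repeats the first.\<close>

definition Hp_label :: "nat \<Rightarrow> nat \<Rightarrow> (nat \<Rightarrow> real) \<Rightarrow> nat \<Rightarrow> bool \<times> bool" where
  "Hp_label i j x =
     restrict (\<lambda>k. (x j < x k, if k < i then - x j < x k else x j < x k)) ({1..<j} - {i})"

lemma Hp_label_fibre:
  assumes ij: "1 \<le> i" "i < j" "j \<le> n"
  shows "{y \<in> Hp_complement n i j. Hp_label i j y = Hp_label i j x}
    = hyp n (sum_root i j) \<inter> pos_cone n ((\<lambda>k. signed (x j < x k) (diff_root j k)) ` ({1..<j} - {i})
        \<union> (\<lambda>k. signed (- x j < x k) (sum_root k j)) ` {1..<i})"
proof (rule set_eqI)
  fix y
  let ?K = "{1..<j} - {i}" and ?L = "{1..<i}"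
  have diff: "0 < ip n y (signed (x j < x k) (diff_root j k))
      \<longleftrightarrow> y k \<noteq> y j \<and> (y j < y k) = (x j < x k)" if "k \<in> ?K" for k
    using that ij by (auto simp: ip_signed_pos_iff ip_diff_root)
  have sum: "0 < ip n y (signed (- x j < x k) (sum_root k j))
      \<longleftrightarrow> y k \<noteq> - y j \<and> (- y j < y k) = (- x j < x k)" if "k \<in> ?L" for k
    using that ij by (auto simp: ip_signed_pos_iff ip_sum_root)
  have "Hp_label i j y = Hp_label i j x
      \<longleftrightarrow> (\<forall>k\<in>?K. (y j < y k) = (x j < x k)) \<and> (\<forall>k\<in>?L. (- y j < y k) = (- x j < x k))"
    using ij by (auto simp: Hp_label_def restrict_def fun_eq_iff)
  then have "y \<in> {y \<in> Hp_complement n i j. Hp_label i j y = Hp_label i j x}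
      \<longleftrightarrow> y \<in> hyp n (sum_root i j) \<and> (\<forall>k\<in>?K. y k \<noteq> y j \<and> (y j < y k) = (x j < x k))
          \<and> (\<forall>k\<in>?L. y k \<noteq> - y j \<and> (- y j < y k) = (- x j < x k))"
    by (auto simp: Hp_complement_def)
  also have "\<dots> \<longleftrightarrow> y \<in> hyp n (sum_root i j)
      \<and> (\<forall>k\<in>?K. 0 < ip n y (signed (x j < x k) (diff_root j k)))
      \<and> (\<forall>k\<in>?L. 0 < ip n y (signed (- x j < x k) (sum_root k j)))"
    using diff sum by simp
  also have "\<dots> \<longleftrightarrow> y \<in> hyp n (sum_root i j) \<inter> pos_cone n ((\<lambda>k. signed (x j < x k) (diff_root j k)) ` ?K
        \<union> (\<lambda>k. signed (- x j < x k) (sum_root k j)) ` ?L)"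
    by (auto simp: pos_cone_def hyp_def)
  finally show "y \<in> {y \<in> Hp_complement n i j. Hp_label i j y = Hp_label i j x}
      \<longleftrightarrow> y \<in> hyp n (sum_root i j) \<inter> pos_cone n ((\<lambda>k. signed (x j < x k) (diff_root j k)) ` ?K
        \<union> (\<lambda>k. signed (- x j < x k) (sum_root k j)) ` ?L)" .
qed

lemma Hp_labels_nonneg_surj:
  assumes ij: "1 \<le> i" "i < j" "j \<le> n"
    and \<sigma>: "\<sigma> \<in> PiE ({1..<j} - {i}) (\<lambda>k. if k < i then {(a, b). a \<longrightarrow> b} else {(a, b). a = b})"
  shows "\<sigma> \<in> Hp_label i j ` Hp_complement n i j"
proof
  let ?K = "{1..<j} - {i}"
  define x where "x = (\<lambda>m. if m = j then 1 else if m = i then -1 else if m \<in> ?K then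
      (if fst (\<sigma> m) then 2 else if snd (\<sigma> m) then 0 else -2) else (0::real))"
  show "x \<in> Hp_complement n i j"
    using ij by (auto simp: x_def Hp_complement_def hyp_def Vsp_def ip_sum_root)
  have "(x j < x k, if k < i then - x j < x k else x j < x k) = \<sigma> k" if k: "k \<in> ?K" for k
  proof -
    have "\<sigma> k \<in> (if k < i then {(a, b). a \<longrightarrow> b} else {(a, b). a = b})" using \<sigma> k by blast
    then show ?thesis using k by (cases "\<sigma> k") (auto simp: x_def split: if_splits)
  qed
  then show "\<sigma> = Hp_label i j x"
    using \<sigma> by (auto simp: Hp_label_def restrict_def fun_eq_iff PiE_def extensional_def)
qed

lemma Hp_label_uminus:
  assumes x: "x \<in> Hp_complement n i j"
  shows "(\<lambda>m. - x m) \<in> Hp_complement n i j"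
    and "Hp_label i j (\<lambda>m. - x m) =
      restrict (\<lambda>k. (\<not> fst (Hp_label i j x k), \<not> snd (Hp_label i j x k))) ({1..<j} - {i})"
proof -
  show "(\<lambda>m. - x m) \<in> Hp_complement n i j"
    using x by (auto simp: Hp_complement_def hyp_def Vsp_def ip_linear)
  show "Hp_label i j (\<lambda>m. - x m) =
      restrict (\<lambda>k. (\<not> fst (Hp_label i j x k), \<not> snd (Hp_label i j x k))) ({1..<j} - {i})"
  proof (rule ext)
    fix k
    show "Hp_label i j (\<lambda>m. - x m) k =
        restrict (\<lambda>k. (\<not> fst (Hp_label i j x k), \<not> snd (Hp_label i j x k))) ({1..<j} - {i}) k"
    proof (cases "k \<in> {1..<j} - {i}")
      case True
      then have "x k \<noteq> x j" "k < i \<Longrightarrow> x k \<noteq> - x j" using x by (auto simp: Hp_complement_def)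
      then show ?thesis using True by (auto simp: Hp_label_def)
    next
      case False
      then show ?thesis by (simp only: Hp_label_def restrict_def if_False)
    qed
  qed
qed

lemma Hp_labels_image:
  assumes ij: "1 \<le> i" "i < j" "j \<le> n"
  shows "Hp_label i j ` Hp_complement n i j =
      PiE ({1..<j} - {i}) (\<lambda>k. if k < i then {(a, b). a \<longrightarrow> b} else {(a, b). a = b}) \<union>
      PiE ({1..<j} - {i}) (\<lambda>k. if k < i then {(a, b). b \<longrightarrow> a} else {(a, b). a = b})"
    (is "_ = ?X \<union> ?Y")
proof
  show "Hp_label i j ` Hp_complement n i j \<subseteq> ?X \<union> ?Y"
  proof (rule image_subsetI)
    fix x assume "x \<in> Hp_complement n i j"
    \<comment> \<open>the sign of \<open>x\<^sub>j\<close> decides which of \<open>x\<^sub>j\<close> and \<open>-x\<^sub>j\<close> is the larger one\<close>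
    show "Hp_label i j x \<in> ?X \<union> ?Y"
      by (cases "0 \<le> x j") (auto simp: Hp_label_def)
  qed
  show "?X \<union> ?Y \<subseteq> Hp_label i j ` Hp_complement n i j"
  proof
    fix \<sigma> assume "\<sigma> \<in> ?X \<union> ?Y"
    then consider "\<sigma> \<in> ?X" | "\<sigma> \<in> ?Y" by blast
    then show "\<sigma> \<in> Hp_label i j ` Hp_complement n i j"
    proof cases
      case 1
      then show ?thesis by (rule Hp_labels_nonneg_surj[OF ij])
    next
      case 2
      let ?neg = "\<lambda>\<tau>. restrict (\<lambda>k. (\<not> fst (\<tau> k), \<not> snd (\<tau> k))) ({1..<j} - {i})"
      have "?neg \<sigma> \<in> ?X"
        unfolding PiE_iff
      proof (intro conjI ballI)
        fix k assume k: "k \<in> {1..<j} - {i}"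
        then have "\<sigma> k \<in> (if k < i then {(a, b). b \<longrightarrow> a} else {(a, b). a = b})" using 2 by blast
        then show "?neg \<sigma> k \<in> (if k < i then {(a, b). a \<longrightarrow> b} else {(a, b). a = b})"
          using k by (cases "\<sigma> k") auto
      qed simp
      then obtain x where x: "x \<in> Hp_complement n i j" "?neg \<sigma> = Hp_label i j x"
        using Hp_labels_nonneg_surj[OF ij] by blast
      have "Hp_label i j (\<lambda>m. - x m) = \<sigma>"
      proof (rule ext)
        fix k
        show "Hp_label i j (\<lambda>m. - x m) k = \<sigma> k"
        proof (cases "k \<in> {1..<j} - {i}")
          case True
          then have "Hp_label i j x k = (\<not> fst (\<sigma> k), \<not> snd (\<sigma> k))"
            using x(2)[symmetric] by simp
          then show ?thesis using True Hp_label_uminus(2)[OF x(1)] by (cases "\<sigma> k") simp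
        next
          case False
          then have "\<sigma> k = undefined" using 2 by (simp add: PiE_def extensional_def)
          then show ?thesis using False Hp_label_uminus(2)[OF x(1)] by (simp only: restrict_def if_False)
        qed
      qed
      then show ?thesis using Hp_label_uminus(1)[OF x(1)] by blast
    qed
  qed
qed

lemma card_PiE_split_at:
  assumes "1 \<le> i" "i < j"
  shows "card (PiE ({1..<j} - {i}) (\<lambda>k. if k < i then A else B)) = card A ^ (i - 1) * card B ^ (j - i - 1)"
proof -
  have split: "{1..<j} - {i} = {1..<i} \<union> {i<..<j}" using assms by auto
  have "card (PiE ({1..<j} - {i}) (\<lambda>k. if k < i then A else B))
      = (\<Prod>k\<in>{1..<i} \<union> {i<..<j}. card (if k < i then A else B))"
    unfolding split by (simp add: card_PiE)
  also have "\<dots> = (\<Prod>k\<in>{1..<i}. card (if k < i then A else B)) * (\<Prod>k\<in>{i<..<j}. card (if k < i then A else B))"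
    by (rule prod.union_disjoint) auto
  also have "\<dots> = card A ^ (i - 1) * card B ^ (j - i - 1)" by simp
  finally show ?thesis .
qed

lemma card_bool_relations:
  "card {(a, b). (a::bool) \<longrightarrow> b} = 3" "card {(a, b). (b::bool) \<longrightarrow> a} = 3" "card {(a, b). (a::bool) = b} = 2"
proof -
  have "{(a, b). (a::bool) \<longrightarrow> b} = {(False, False), (False, True), (True, True)}"
    "{(a, b). (b::bool) \<longrightarrow> a} = {(False, False), (True, False), (True, True)}"
    "{(a, b). (a::bool) = b} = {(False, False), (True, True)}" by auto
  then show "card {(a, b). (a::bool) \<longrightarrow> b} = 3" "card {(a, b). (b::bool) \<longrightarrow> a} = 3"
    "card {(a, b). (a::bool) = b} = 2" by simp_all
qed

lemma card_Hp_labels: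
  assumes ij: "1 \<le> i" "i < j"
  defines "X \<equiv> PiE ({1..<j} - {i}) (\<lambda>k. if k < i then {(a, b). a \<longrightarrow> b} else {(a, b). a = b})"
    and "Y \<equiv> PiE ({1..<j} - {i}) (\<lambda>k. if k < i then {(a, b). b \<longrightarrow> a} else {(a, b). a = b})"
  shows "finite (X \<union> Y)" "int (card (X \<union> Y)) = 2 ^ (j - i) * 3 ^ (i - 1) - 2 ^ (j - 2)"
proof -
  have fin: "finite X" "finite Y" unfolding X_def Y_def by (auto intro!: finite_PiE)
  then show "finite (X \<union> Y)" by simp
  have "X \<inter> Y = PiE ({1..<j} - {i}) (\<lambda>k. if k < i then {(a, b). (a::bool) = b} else {(a, b). a = b})"
    unfolding X_def Y_def PiE_Int by (rule PiE_cong) auto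
  moreover have "card ({1..<j} - {i}) = j - 2" using ij by (simp add: card_Diff_singleton)
  ultimately have "card (X \<inter> Y) = 2 ^ (j - 2)" by (simp add: card_PiE card_bool_relations)
  moreover have "card X = 3 ^ (i - 1) * 2 ^ (j - i - 1)" "card Y = 3 ^ (i - 1) * 2 ^ (j - i - 1)"
    unfolding X_def Y_def by (simp_all only: card_PiE_split_at[OF ij] card_bool_relations)
  moreover have "int (card (X \<union> Y)) + int (card (X \<inter> Y)) = int (card X) + int (card Y)"
    using card_Un_Int[OF fin] by (simp flip: of_nat_add)
  moreover have "(2::int) ^ (j - i) = 2 * 2 ^ (j - i - 1)" using ij by (simp flip: power_Suc)
  ultimately show "int (card (X \<union> Y)) = 2 ^ (j - i) * 3 ^ (i - 1) - 2 ^ (j - 2)"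
    by simp
qed

lemma card_shards_Hp:
  assumes ij: "1 \<le> i" "i < j" "j \<le> n"
  shows "finite (shards_of n (posD n) (Hp n i j))"
    and "int (card (shards_of n (posD n) (Hp n i j))) = 2 ^ (j - i) * 3 ^ (i - 1) - 2 ^ (j - 2)"
proof -
  have "Hp_complement n i j \<subseteq> hyp n (sum_root i j)" by (auto simp: Hp_complement_def)
  then have "bij_betw (\<lambda>\<sigma>. closure {y \<in> Hp_complement n i j. Hp_label i j y = \<sigma>})
      (Hp_label i j ` Hp_complement n i j) (shards_of n (posD n) (Hp n i j))"
    unfolding shards_of_Hp[OF ij] by (rule closure_components_by_cells(1)[OF _ _ Hp_label_fibre[OF ij]]) simp
  then have "finite (shards_of n (posD n) (Hp n i j)) \<longleftrightarrow> finite (Hp_label i j ` Hp_complement n i j)"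
    "card (shards_of n (posD n) (Hp n i j)) = card (Hp_label i j ` Hp_complement n i j)"
    by (simp_all add: bij_betw_finite bij_betw_same_card)
  then show "finite (shards_of n (posD n) (Hp n i j))"
    "int (card (shards_of n (posD n) (Hp n i j))) = 2 ^ (j - i) * 3 ^ (i - 1) - 2 ^ (j - 2)"
    using card_Hp_labels[OF ij(1,2)] unfolding Hp_labels_image[OF ij] by simp_all
qed

lemma card_shards_posD:
  "card (shards n (posD n)) = (\<Sum>(i, j)\<in>index_pairs n.
      card (shards_of n (posD n) (Hm n i j)) + card (shards_of n (posD n) (Hp n i j)))"
proof -
  let ?c = "\<lambda>\<gamma>. card (shards_of n (posD n) (hyp n \<gamma>))"
  let ?m = "\<lambda>(i, j). diff_root i j" and ?p = "\<lambda>(i, j). sum_root i j"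
  have inj: "inj_on ?m (index_pairs n)" "inj_on ?p (index_pairs n)"
    by (auto simp: inj_on_def index_pairs_def diff_root_eq_iff sum_root_eq_iff)
  have "?m ` index_pairs n \<inter> ?p ` index_pairs n = {}"
    by (auto simp: index_pairs_def diff_root_ne_sum_root)
  then have "sum ?c (?m ` index_pairs n \<union> ?p ` index_pairs n)
      = sum ?c (?m ` index_pairs n) + sum ?c (?p ` index_pairs n)"
    by (rule sum.union_disjoint[rotated 2]) (simp_all add: finite_index_pairs)
  moreover have "card (shards n (posD n)) = sum ?c (?m ` index_pairs n \<union> ?p ` index_pairs n)"
    unfolding typeD.card_shards(2) by (rule arg_cong[where f = "sum ?c"]) (rule posD_eq)
  ultimately have "card (shards n (posD n)) = sum ?c (?m ` index_pairs n) + sum ?c (?p ` index_pairs n)"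
    by simp
  also have "\<dots> = (\<Sum>q\<in>index_pairs n. ?c (?m q) + ?c (?p q))"
    by (simp add: sum.reindex[OF inj(1)] sum.reindex[OF inj(2)] sum.distrib)
  also have "\<dots> = (\<Sum>(i, j)\<in>index_pairs n.
      card (shards_of n (posD n) (Hm n i j)) + card (shards_of n (posD n) (Hp n i j)))"
    by (rule sum.cong) (auto simp: index_pairs_def Hm_eq_hyp Hp_eq_hyp)
  finally show ?thesis .
qed

lemma sum_power2_rev: "(\<Sum>i=1..n. (2::int) ^ (n - i)) = 2 ^ n - 1"
proof (induction n)
  case (Suc n)
  have "(\<Sum>i=1..Suc n. (2::int) ^ (Suc n - i)) = (\<Sum>i=1..n. (2::int) ^ (Suc n - i)) + 1"
    by simp
  also have "(\<Sum>i=1..n. (2::int) ^ (Suc n - i)) = 2 * (\<Sum>i=1..n. 2 ^ (n - i))"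
    unfolding sum_distrib_left by (rule sum.cong) (auto simp: Suc_diff_le)
  finally show ?case using Suc.IH by simp
qed simp

lemma sum_power2_power3: "(\<Sum>i=1..n. (2::int) ^ (n + 1 - i) * 3 ^ (i - 1)) = 2 * 3 ^ n - 2 * 2 ^ n"
proof (induction n)
  case (Suc n)
  have "(\<Sum>i=1..Suc n. (2::int) ^ (Suc n + 1 - i) * 3 ^ (i - 1))
      = (\<Sum>i=1..n. (2::int) ^ (Suc n + 1 - i) * 3 ^ (i - 1)) + 2 * 3 ^ n"
    by simp
  also have "(\<Sum>i=1..n. (2::int) ^ (Suc n + 1 - i) * 3 ^ (i - 1))
      = 2 * (\<Sum>i=1..n. 2 ^ (n + 1 - i) * 3 ^ (i - 1))"
    unfolding sum_distrib_left by (rule sum.cong) (auto simp: Suc_diff_le)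
  finally show ?case using Suc.IH by simp
qed simp

lemma index_pairs_Suc: "index_pairs (Suc n) = index_pairs n \<union> (\<lambda>i. (i, Suc n)) ` {1..n}"
  by (auto simp: index_pairs_def)

lemma sum_shard_counts:
  "(\<Sum>(i, j)\<in>index_pairs n. (2::int) ^ (j - i - 1) + 2 ^ (j - i) * 3 ^ (i - 1) - 2 ^ (j - 2))
     = 3 ^ n - int n * 2 ^ (n - 1) - int n - 1"
proof (induction n)
  case 0
  have "index_pairs 0 = {}" by (auto simp: index_pairs_def)
  then show ?case by simp
next
  case (Suc n)
  let ?F = "\<lambda>(i, j). (2::int) ^ (j - i - 1) + 2 ^ (j - i) * 3 ^ (i - 1) - 2 ^ (j - 2)"
  have "index_pairs n \<inter> (\<lambda>i. (i, Suc n)) ` {1..n} = {}" by (auto simp: index_pairs_def)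
  then have "sum ?F (index_pairs (Suc n)) = sum ?F (index_pairs n) + (\<Sum>i=1..n. ?F (i, Suc n))"
    unfolding index_pairs_Suc
    by (simp add: sum.union_disjoint finite_index_pairs sum.reindex inj_on_def)
  also have "(\<Sum>i=1..n. ?F (i, Suc n))
      = (\<Sum>i=1..n. (2::int) ^ (n - i)) + (\<Sum>i=1..n. 2 ^ (n + 1 - i) * 3 ^ (i - 1)) - int n * 2 ^ (n - 1)"
    by (simp add: sum.distrib sum_subtractf Suc_diff_le)
  also have "\<dots> = 2 ^ n - 1 + (2 * 3 ^ n - 2 * 2 ^ n) - int n * 2 ^ (n - 1)"
    by (simp only: sum_power2_rev sum_power2_power3)
  finally have step: "sum ?F (index_pairs (Suc n)) =
      3 ^ n - int n * 2 ^ (n - 1) - int n - 1 + (2 ^ n - 1 + (2 * 3 ^ n - 2 * 2 ^ n) - int n * 2 ^ (n - 1))"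
    using Suc.IH by simp
  show ?case unfolding step by (cases n) (simp_all add: algebra_simps)
qed

theorem mainTheorem10:
  fixes n :: nat
  assumes "2 \<le> n"
  shows "(\<forall>i j. 1 \<le> i \<and> i < j \<and> j \<le> n \<longrightarrow>
            finite (shards_of n (posD n) (Hm n i j)) \<and>
            int (card (shards_of n (posD n) (Hm n i j))) = 2 ^ (j - i - 1) \<and>
            finite (shards_of n (posD n) (Hp n i j)) \<and>
            int (card (shards_of n (posD n) (Hp n i j))) = 2 ^ (j - i) * 3 ^ (i - 1) - 2 ^ (j - 2))
       \<and> finite (shards n (posD n))
       \<and> int (card (shards n (posD n))) =
           (\<Sum>(i, j) \<in> {(i, j). 1 \<le> i \<and> i < j \<and> j \<le> n}.
              (2::int) ^ (j - i - 1) + 2 ^ (j - i) * 3 ^ (i - 1) - 2 ^ (j - 2))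
       \<and> (\<Sum>(i, j) \<in> {(i, j). 1 \<le> i \<and> i < j \<and> j \<le> n}.
              (2::int) ^ (j - i - 1) + 2 ^ (j - i) * 3 ^ (i - 1) - 2 ^ (j - 2))
           = 3 ^ n - int n * 2 ^ (n - 1) - int n - 1"
proof -
  have counts: "finite (shards_of n (posD n) (Hm n i j)) \<and>
      int (card (shards_of n (posD n) (Hm n i j))) = 2 ^ (j - i - 1) \<and>
      finite (shards_of n (posD n) (Hp n i j)) \<and>
      int (card (shards_of n (posD n) (Hp n i j))) = 2 ^ (j - i) * 3 ^ (i - 1) - 2 ^ (j - 2)"
    if "(i, j) \<in> index_pairs n" for i j
    using that card_shards_Hm card_shards_Hp by (simp add: index_pairs_def)
  have "int (card (shards n (posD n))) = (\<Sum>(i, j)\<in>index_pairs n.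
      (2::int) ^ (j - i - 1) + 2 ^ (j - i) * 3 ^ (i - 1) - 2 ^ (j - 2))"
    unfolding card_shards_posD of_nat_sum by (rule sum.cong) (auto simp: counts)
  then show ?thesis
    using counts typeD.card_shards(1) sum_shard_counts by (simp add: index_pairs_def)
qed

end
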